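(* Let $M=\prod_{n\in\mathbb N}M_n$ be a product of connected (finite-dimensional) manifolds, with the product topology. Then every $f\in\mathcal C^\infty(M)$ is continuous.
   Context: The canonical $\mathcal C^\infty$ structure on a product $\prod_tM_t$ of manifolds: its structure curves are the maps $c:\mathbb R\to\prod_tM_t$ whose components $c_t:\mathbb R\to M_t$ are all smooth, and $\mathcal C^\infty(M)$ is the set of functions $f:M\to\mathbb R$ with $f\circ c\in C^\infty(\mathbb R,\mathbb R)$ for every structure curve $c$. *)

theory Defs
  imports "HOL-Analysis.Analysis"
begin

text \<open>Euclidean space R^d, realised as the coordinate subspace of nat => real
  (with the product topology, which restricts to the usual topology on it).\<close>

definition Rn :: "nat \<Rightarrow> (nat \<Rightarrow> real) set" where
  "Rn d = {x. \<forall>i\<ge>d. x i = 0}"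

definition Rn_top :: "nat \<Rightarrow> (nat \<Rightarrow> real) topology" where
  "Rn_top d = subtopology euclidean (Rn d)"

fun Ck :: "nat \<Rightarrow> nat \<Rightarrow> (nat \<Rightarrow> real) set \<Rightarrow> ((nat \<Rightarrow> real) \<Rightarrow> real) \<Rightarrow> bool" where
  "Ck d 0 V f = continuous_on V f"
| "Ck d (Suc k) V f = (continuous_on V f \<and>
     (\<forall>i<d. \<exists>g. (\<forall>x\<in>V. ((\<lambda>h. f (x(i := x i + h))) has_real_derivative g x) (at 0))
                 \<and> Ck d k V g))"

definition smooth_map_Rn :: "nat \<Rightarrow> nat \<Rightarrow> (nat \<Rightarrow> real) set \<Rightarrow> ((nat \<Rightarrow> real) \<Rightarrow> (nat \<Rightarrow> real)) \<Rightarrow> bool" where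
  "smooth_map_Rn d e V g \<longleftrightarrow> g ` V \<subseteq> Rn e \<and> (\<forall>j<e. \<forall>k. Ck d k V (\<lambda>x. g x j))"

fun Ck_real :: "nat \<Rightarrow> real set \<Rightarrow> (real \<Rightarrow> real) \<Rightarrow> bool" where
  "Ck_real 0 S g = continuous_on S g"
| "Ck_real (Suc k) S g = (continuous_on S g \<and>
     (\<exists>g'. (\<forall>x\<in>S. (g has_real_derivative g' x) (at x)) \<and> Ck_real k S g'))"

definition smooth_real_on :: "real set \<Rightarrow> (real \<Rightarrow> real) \<Rightarrow> bool" where
  "smooth_real_on S g \<longleftrightarrow> (\<forall>k. Ck_real k S g)"

definition is_chart :: "'a topology \<Rightarrow> nat \<Rightarrow> 'a set \<Rightarrow> ('a \<Rightarrow> nat \<Rightarrow> real) \<Rightarrow> bool" where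
  "is_chart T d U \<phi> \<longleftrightarrow> openin T U \<and> openin (Rn_top d) (\<phi> ` U) \<and>
     homeomorphic_map (subtopology T U) (subtopology (Rn_top d) (\<phi> ` U)) \<phi>"

definition smooth_manifold :: "'a topology \<Rightarrow> nat \<Rightarrow> ('a set \<times> ('a \<Rightarrow> nat \<Rightarrow> real)) set \<Rightarrow> bool" where
  "smooth_manifold T d A \<longleftrightarrow> Hausdorff_space T \<and> second_countable T \<and>
     (\<forall>(U, \<phi>)\<in>A. is_chart T d U \<phi>) \<and>
     \<Union>(fst ` A) = topspace T \<and>
     (\<forall>(U, \<phi>)\<in>A. \<forall>(U', \<psi>)\<in>A.
        smooth_map_Rn d d (\<phi> ` (U \<inter> U')) (\<psi> \<circ> inv_into U \<phi>))"

definition smooth_curve :: "'a topology \<Rightarrow> nat \<Rightarrow> ('a set \<times> ('a \<Rightarrow> nat \<Rightarrow> real)) set \<Rightarrow> (real \<Rightarrow> 'a) \<Rightarrow> bool" where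
  "smooth_curve T d A c \<longleftrightarrow> continuous_map euclideanreal T c \<and>
     (\<forall>(U, \<phi>)\<in>A. \<forall>j<d. smooth_real_on (c -` U) (\<lambda>s. \<phi> (c s) j))"

definition structure_curve :: "(nat \<Rightarrow> 'a topology) \<Rightarrow> (nat \<Rightarrow> nat) \<Rightarrow> (nat \<Rightarrow> ('a set \<times> ('a \<Rightarrow> nat \<Rightarrow> real)) set)
     \<Rightarrow> (real \<Rightarrow> nat \<Rightarrow> 'a) \<Rightarrow> bool" where
  "structure_curve T d A c \<longleftrightarrow> (\<forall>t. smooth_curve (T t) (d t) (A t) (\<lambda>s. c s t))"

definition Cinf_prod :: "(nat \<Rightarrow> 'a topology) \<Rightarrow> (nat \<Rightarrow> nat) \<Rightarrow> (nat \<Rightarrow> ('a set \<times> ('a \<Rightarrow> nat \<Rightarrow> real)) set)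
     \<Rightarrow> ((nat \<Rightarrow> 'a) \<Rightarrow> real) set" where
  "Cinf_prod T d A = {f. \<forall>c. structure_curve T d A c \<longrightarrow> smooth_real_on UNIV (f \<circ> c)}"

end

(* It suffices to find neighbourhoods W k of x such that f (y k) tends to f x whenever y k lies
   in W k for all k. We take W k to be the set of points whose coordinates t < k lie within
   2^(-k^2) of x t in fixed charts around the x t. Given such a sequence, for every t the points
   y k t are threaded on one smooth curve c_t with c_t 0 = x t and c_t (2^-k) = y k t: on
   [2^-(k+1), 2^-k] the curve runs from y (k+1) t to y k t, along a chart segment reparametrised
   by a flat step function once k > t, and along some smooth path with stationary ends (which
   exists by connectedness) for the finitely many k <= t. The m-th derivative of the k-th chart
   piece is of order 2^(k m) 2^(-k^2), which tends to 0, so c_t is smooth also at 0. The c_t form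
   a structure curve c, hence f o c is continuous and f (y k) = f (c (2^-k)) tends to
   f (c 0) = f x. *)

theory Submission
  imports Defs "HOL-Computational_Algebra.Polynomial"
begin

section \<open>Smooth functions of one real variable\<close>

lemma Ck_real_Suc_imp: "Ck_real (Suc k) S g \<Longrightarrow> Ck_real k S g"
  by (induction k arbitrary: g) auto

lemma Ck_real_subset: "Ck_real k S g \<Longrightarrow> T \<subseteq> S \<Longrightarrow> Ck_real k T g"
  by (induction k arbitrary: g) (auto intro: continuous_on_subset)

lemma Ck_real_cong:
  "open S \<Longrightarrow> (\<And>x. x \<in> S \<Longrightarrow> g x = h x) \<Longrightarrow> Ck_real k S g \<Longrightarrow> Ck_real k S h"
proof (induction k arbitrary: g h)
  case 0
  then show ?case
    using continuous_on_cong by force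
next
  case (Suc k)
  from Suc.prems obtain g' where g': "\<forall>x\<in>S. (g has_real_derivative g' x) (at x)" "Ck_real k S g'"
    and "continuous_on S g"
    by auto
  then have "continuous_on S h"
    using Suc.prems continuous_on_cong by force
  moreover have "\<forall>x\<in>S. (h has_real_derivative g' x) (at x)"
    using g' Suc.prems has_field_derivative_transform_within_open by blast
  ultimately show ?case
    using g' by auto
qed

lemma Ck_real_const: "Ck_real k S (\<lambda>_. c)"
  by (induction k arbitrary: c) (auto intro!: exI[of _ "\<lambda>_. 0"])

lemma Ck_real_id: "Ck_real k S (\<lambda>x. x)"
  by (cases k) (auto intro!: exI[of _ "\<lambda>_. 1"] Ck_real_const simp: continuous_on_id)

lemma Ck_real_add: "Ck_real k S f \<Longrightarrow> Ck_real k S g \<Longrightarrow> Ck_real k S (\<lambda>x. f x + g x)"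
proof (induction k arbitrary: f g)
  case 0
  then show ?case
    by (auto intro: continuous_intros)
next
  case (Suc k)
  from Suc.prems obtain f' g' where
    "\<forall>x\<in>S. (f has_real_derivative f' x) (at x)" "Ck_real k S f'" "continuous_on S f"
    "\<forall>x\<in>S. (g has_real_derivative g' x) (at x)" "Ck_real k S g'" "continuous_on S g"
    by auto
  then show ?case
    using Suc.IH by (auto intro!: exI[of _ "\<lambda>x. f' x + g' x"] continuous_intros derivative_intros)
qed

lemma Ck_real_mult: "Ck_real k S f \<Longrightarrow> Ck_real k S g \<Longrightarrow> Ck_real k S (\<lambda>x. f x * g x)"
proof (induction k arbitrary: f g)
  case 0
  then show ?case
    by (auto intro: continuous_intros)
next
  case (Suc k)
  from Suc.prems obtain f' g' where d:
    "\<forall>x\<in>S. (f has_real_derivative f' x) (at x)" "Ck_real k S f'" "continuous_on S f"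
    "\<forall>x\<in>S. (g has_real_derivative g' x) (at x)" "Ck_real k S g'" "continuous_on S g"
    by auto
  have "Ck_real k S (\<lambda>x. f' x * g x + f x * g' x)"
    using Suc.IH Ck_real_add d Ck_real_Suc_imp Suc.prems by metis
  with d show ?case
    by (auto intro!: exI[of _ "\<lambda>x. f' x * g x + f x * g' x"] continuous_intros derivative_eq_intros)
qed

lemma Ck_real_inverse:
  "Ck_real k S g \<Longrightarrow> (\<forall>x\<in>S. g x \<noteq> 0) \<Longrightarrow> Ck_real k S (\<lambda>x. inverse (g x))"
proof (induction k arbitrary: g)
  case 0
  then show ?case
    by (auto intro: continuous_intros)
next
  case (Suc k)
  from Suc.prems obtain g' where d:
    "\<forall>x\<in>S. (g has_real_derivative g' x) (at x)" "Ck_real k S g'" "continuous_on S g"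
    by auto
  define h where "h x = (-1) * (g' x * (inverse (g x) * inverse (g x)))" for x
  have "Ck_real k S (\<lambda>x. inverse (g x))"
    using Suc Ck_real_Suc_imp by blast
  then have "Ck_real k S h"
    unfolding h_def by (intro Ck_real_mult Ck_real_const d(2))
  moreover have "continuous_on S (\<lambda>x. inverse (g x))"
    using d(3) Suc.prems(2) by (intro continuous_on_inverse) auto
  moreover have "((\<lambda>x. inverse (g x)) has_real_derivative h x) (at x)" if "x \<in> S" for x
    using that d(1) Suc.prems(2) DERIV_inverse_fun[of g "g' x" x] by (simp add: h_def power2_eq_square)
  ultimately show ?case
    unfolding Ck_real.simps by blast
qed

lemma Ck_real_compose:
  "Ck_real k T f \<Longrightarrow> Ck_real k S g \<Longrightarrow> g ` S \<subseteq> T \<Longrightarrow> Ck_real k S (\<lambda>x. f (g x))"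
proof (induction k arbitrary: f g)
  case 0
  then show ?case
    by (auto intro: continuous_on_compose2)
next
  case (Suc k)
  from Suc.prems obtain f' g' where d:
    "\<forall>x\<in>T. (f has_real_derivative f' x) (at x)" "Ck_real k T f'" "continuous_on T f"
    "\<forall>x\<in>S. (g has_real_derivative g' x) (at x)" "Ck_real k S g'" "continuous_on S g"
    by auto
  have "Ck_real k S (\<lambda>x. f' (g x) * g' x)"
    using Suc.IH Ck_real_mult d Ck_real_Suc_imp Suc.prems by metis
  moreover have "continuous_on S (\<lambda>x. f (g x))"
    using d Suc.prems by (auto intro: continuous_on_compose2)
  moreover have "\<forall>x\<in>S. ((\<lambda>x. f (g x)) has_real_derivative f' (g x) * g' x) (at x)"
  proof
    fix x assume "x \<in> S"
    then show "((\<lambda>x. f (g x)) has_real_derivative f' (g x) * g' x) (at x)"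
      using d Suc.prems by (intro DERIV_chain2) auto
  qed
  ultimately show ?case
    by auto
qed

lemma Ck_real_sum:
  "finite I \<Longrightarrow> (\<And>i. i \<in> I \<Longrightarrow> Ck_real k S (f i)) \<Longrightarrow> Ck_real k S (\<lambda>x. \<Sum>i\<in>I. f i x)"
  by (induction I rule: finite_induct) (auto intro: Ck_real_add Ck_real_const)

lemma Ck_real_Suc_iff:
  assumes "open S"
  shows "Ck_real (Suc k) S g \<longleftrightarrow>
    (\<forall>x\<in>S. (g has_real_derivative deriv g x) (at x)) \<and> Ck_real k S (deriv g)"
proof
  assume "Ck_real (Suc k) S g"
  then obtain g' where g': "\<forall>x\<in>S. (g has_real_derivative g' x) (at x)" "Ck_real k S g'"
    by auto
  then have "\<forall>x\<in>S. deriv g x = g' x"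
    by (auto intro: DERIV_imp_deriv)
  with g' assms show "(\<forall>x\<in>S. (g has_real_derivative deriv g x) (at x)) \<and> Ck_real k S (deriv g)"
    using Ck_real_cong[of S g' "deriv g"] by auto
next
  assume R: "(\<forall>x\<in>S. (g has_real_derivative deriv g x) (at x)) \<and> Ck_real k S (deriv g)"
  then have "continuous_on S g"
    by (meson DERIV_isCont continuous_at_imp_continuous_on)
  with R show "Ck_real (Suc k) S g" by auto
qed

lemma higher_deriv_Suc_right: "(deriv ^^ Suc m) g = (deriv ^^ m) (deriv g)"
  by (simp add: funpow_Suc_right del: funpow.simps)

lemma smooth_real_on_deriv: "open S \<Longrightarrow> smooth_real_on S g \<Longrightarrow> smooth_real_on S (deriv g)"
  unfolding smooth_real_on_def using Ck_real_Suc_iff by blast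

lemma smooth_real_on_has_real_derivative:
  "open S \<Longrightarrow> smooth_real_on S g \<Longrightarrow> x \<in> S \<Longrightarrow> (g has_real_derivative deriv g x) (at x)"
  unfolding smooth_real_on_def using Ck_real_Suc_iff by blast

lemma smooth_real_on_iff_higher_deriv:
  assumes "open S"
  shows "smooth_real_on S g \<longleftrightarrow>
    (\<forall>m. \<forall>x\<in>S. ((deriv ^^ m) g has_real_derivative (deriv ^^ Suc m) g x) (at x))"
proof
  have "\<forall>x\<in>S. ((deriv ^^ m) g has_real_derivative (deriv ^^ Suc m) g x) (at x)"
    if "smooth_real_on S g" for m g
    using that
  proof (induction m arbitrary: g)
    case 0
    then show ?case
      using smooth_real_on_has_real_derivative[OF assms] by simp
  next
    case (Suc m)
    from Suc.IH[OF smooth_real_on_deriv[OF assms Suc.prems]] show ?case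
      by (simp only: higher_deriv_Suc_right[of "Suc m"] higher_deriv_Suc_right[of m])
  qed
  then show "smooth_real_on S g \<Longrightarrow>
      \<forall>m. \<forall>x\<in>S. ((deriv ^^ m) g has_real_derivative (deriv ^^ Suc m) g x) (at x)"
    by blast
next
  assume R: "\<forall>m. \<forall>x\<in>S. ((deriv ^^ m) g has_real_derivative (deriv ^^ Suc m) g x) (at x)"
  have "Ck_real k S g" for k
    using R
  proof (induction k arbitrary: g)
    case 0
    then show ?case
      by (metis Ck_real.simps(1) DERIV_isCont continuous_at_imp_continuous_on funpow_0)
  next
    case (Suc k)
    then have "Ck_real k S (deriv g)"
      by (metis higher_deriv_Suc_right)
    moreover have "\<forall>x\<in>S. (g has_real_derivative deriv g x) (at x)"
      using spec[OF Suc.prems, of 0] by simp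
    ultimately show ?case
      using Ck_real_Suc_iff[OF assms] by blast
  qed
  then show "smooth_real_on S g"
    unfolding smooth_real_on_def by blast
qed

lemma smooth_real_on_local:
  assumes "open S" "\<And>x. x \<in> S \<Longrightarrow> \<exists>N. open N \<and> x \<in> N \<and> smooth_real_on N g"
  shows "smooth_real_on S g"
  unfolding smooth_real_on_iff_higher_deriv[OF assms(1)]
proof (intro allI ballI)
  fix m x assume "x \<in> S"
  then obtain N where "open N" "x \<in> N" "smooth_real_on N g"
    using assms by blast
  then show "((deriv ^^ m) g has_real_derivative (deriv ^^ Suc m) g x) (at x)"
    using smooth_real_on_iff_higher_deriv by blast
qed

lemma smooth_real_on_subset: "smooth_real_on S g \<Longrightarrow> T \<subseteq> S \<Longrightarrow> smooth_real_on T g"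
  unfolding smooth_real_on_def using Ck_real_subset by blast

lemma smooth_real_on_cong:
  "open S \<Longrightarrow> (\<And>x. x \<in> S \<Longrightarrow> g x = h x) \<Longrightarrow> smooth_real_on S g \<Longrightarrow> smooth_real_on S h"
  unfolding smooth_real_on_def using Ck_real_cong by blast

lemma smooth_real_on_const: "smooth_real_on S (\<lambda>_. c)"
  unfolding smooth_real_on_def using Ck_real_const by blast

lemma smooth_real_on_id: "smooth_real_on S (\<lambda>x. x)"
  unfolding smooth_real_on_def using Ck_real_id by blast

lemma smooth_real_on_add:
  "smooth_real_on S f \<Longrightarrow> smooth_real_on S g \<Longrightarrow> smooth_real_on S (\<lambda>x. f x + g x)"
  unfolding smooth_real_on_def using Ck_real_add by blast

lemma smooth_real_on_mult:
  "smooth_real_on S f \<Longrightarrow> smooth_real_on S g \<Longrightarrow> smooth_real_on S (\<lambda>x. f x * g x)"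
  unfolding smooth_real_on_def using Ck_real_mult by blast

lemma smooth_real_on_inverse:
  "smooth_real_on S g \<Longrightarrow> (\<forall>x\<in>S. g x \<noteq> 0) \<Longrightarrow> smooth_real_on S (\<lambda>x. inverse (g x))"
  unfolding smooth_real_on_def using Ck_real_inverse by blast

lemma smooth_real_on_compose:
  "smooth_real_on T f \<Longrightarrow> smooth_real_on S g \<Longrightarrow> g ` S \<subseteq> T \<Longrightarrow> smooth_real_on S (\<lambda>x. f (g x))"
  unfolding smooth_real_on_def using Ck_real_compose by blast

lemma smooth_real_on_imp_continuous_on: "smooth_real_on S g \<Longrightarrow> continuous_on S g"
  unfolding smooth_real_on_def by (metis Ck_real.simps(1))

lemma smooth_real_on_affine:
  assumes "smooth_real_on UNIV f"
  shows "smooth_real_on S (\<lambda>x. f (a * x + b))"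
proof -
  have "smooth_real_on S (\<lambda>x. a * x + b)"
    by (intro smooth_real_on_add smooth_real_on_mult smooth_real_on_const smooth_real_on_id)
  then show ?thesis
    using smooth_real_on_compose[OF assms] by blast
qed

lemma smooth_real_on_exp: "smooth_real_on S exp"
proof -
  have "Ck_real k S exp" for k
    by (induction k) (auto intro!: exI[of _ exp] DERIV_exp continuous_on_exp continuous_on_id)
  then show ?thesis
    unfolding smooth_real_on_def by blast
qed

section \<open>Flat functions and a smooth step\<close>

lemma mean_value_right_of_0:
  fixes u v :: "real \<Rightarrow> real"
  assumes "0 < h" and cont_0: "(u \<longlongrightarrow> u 0) (at_right 0)"
    and deriv: "\<And>x. 0 < x \<Longrightarrow> x \<le> h \<Longrightarrow> (u has_real_derivative v x) (at x)"
  shows "\<exists>z. 0 < z \<and> z < h \<and> u h - u 0 = h * v z"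
proof -
  have "continuous (at x within {0..h}) u" if "x \<in> {0..h}" for x
  proof (cases "x = 0")
    case True
    have "at (0::real) within {0..h} = at_right 0"
      using at_within_Icc_at_right \<open>0 < h\<close> by blast
    then show ?thesis
      unfolding True continuous_within using cont_0 by simp
  next
    case False
    with that have "0 < x" "x \<le> h"
      by auto
    then have "isCont u x"
      using deriv DERIV_isCont by blast
    then show ?thesis
      by (rule continuous_at_imp_continuous_at_within)
  qed
  then have "continuous_on {0..h} u"
    using continuous_on_eq_continuous_within by blast
  moreover have "u differentiable (at x)" if "0 < x" "x < h" for x
    using deriv[of x] that unfolding real_differentiable_def by auto
  ultimately obtain l z where z: "0 < z" "z < h" "(u has_real_derivative l) (at z)"
    "u h - u 0 = (h - 0) * l"
    using MVT[OF \<open>0 < h\<close>] by blast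
  moreover have "l = v z"
    using DERIV_unique[OF z(3) deriv] z by auto
  ultimately show ?thesis
    by auto
qed

lemma has_real_derivative_0_if_flat:
  fixes u v :: "real \<Rightarrow> real"
  assumes "a > 0" and zero: "\<And>s. s \<le> 0 \<Longrightarrow> u s = 0"
    and deriv: "\<And>x. 0 < x \<Longrightarrow> x < a \<Longrightarrow> (u has_real_derivative v x) (at x)"
    and lim_u: "(u \<longlongrightarrow> 0) (at_right 0)" and lim_v: "(v \<longlongrightarrow> 0) (at_right 0)"
    and "s \<le> 0"
  shows "(u has_real_derivative 0) (at s)"
proof (cases "s = 0")
  case False
  show ?thesis
    by (rule has_field_derivative_transform_within_open[of "\<lambda>_. 0" _ _ "{..<0}"])
      (use False \<open>s \<le> 0\<close> zero in auto)
next
  case True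
  have right: "((\<lambda>h. (u (0 + h) - u 0) / h) \<longlongrightarrow> 0) (at_right 0)"
    unfolding tendsto_iff
  proof (intro allI impI)
    fix e :: real assume "e > 0"
    with lim_v obtain b where b: "b > 0" "\<And>y. 0 < y \<Longrightarrow> y < b \<Longrightarrow> \<bar>v y\<bar> < e"
      unfolding tendsto_iff eventually_at_right_field by auto
    show "eventually (\<lambda>h. dist ((u (0 + h) - u 0) / h) 0 < e) (at_right 0)"
      unfolding eventually_at_right_field
    proof (intro exI[of _ "min a b"] conjI allI impI)
      show "0 < min a b" using b assms by simp
      fix h :: real assume h: "0 < h" "h < min a b"
      then obtain z where "0 < z" "z < h" "u h - u 0 = h * v z"
        using mean_value_right_of_0[of h u v] lim_u zero[of 0] deriv by auto
      with b(2)[of z] h show "dist ((u (0 + h) - u 0) / h) 0 < e"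
        by (simp add: dist_real_def)
    qed
  qed
  have left: "((\<lambda>h. (u (0 + h) - u 0) / h) \<longlongrightarrow> 0) (at_left 0)"
    using zero by (intro Lim_transform_eventually[OF tendsto_const])
      (auto simp: eventually_at_left_field intro!: exI[of _ "-1"])
  show ?thesis
    unfolding True DERIV_def by (rule filterlim_split_at_real[OF left right])
qed

lemma smooth_real_on_if_flat_at_0:
  fixes g :: "real \<Rightarrow> real"
  assumes a: "a > 0" and zero: "\<And>s. s \<le> 0 \<Longrightarrow> g s = 0"
    and smooth: "smooth_real_on {0<..<a} g"
    and lim: "\<And>m. ((deriv ^^ m) g \<longlongrightarrow> 0) (at_right 0)"
  shows "smooth_real_on {..<a} g"
proof -
  have D: "\<And>m x. 0 < x \<Longrightarrow> x < a \<Longrightarrow>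
      ((deriv ^^ m) g has_real_derivative (deriv ^^ Suc m) g x) (at x)"
    using smooth smooth_real_on_iff_higher_deriv[of "{0<..<a}"] by auto
  have higher_deriv_zero: "\<forall>s\<le>0. (deriv ^^ m) g s = 0" for m
  proof (induction m)
    case 0
    then show ?case using zero by simp
  next
    case (Suc m)
    have "((deriv ^^ m) g has_real_derivative 0) (at s)" if "s \<le> 0" for s
      using has_real_derivative_0_if_flat[OF a _ D lim lim that] Suc by blast
    then show ?case
      by (simp add: DERIV_imp_deriv)
  qed
  show ?thesis
    unfolding smooth_real_on_iff_higher_deriv[OF open_lessThan]
  proof (intro allI ballI)
    fix m x assume x: "x \<in> {..<a}"
    show "((deriv ^^ m) g has_real_derivative (deriv ^^ Suc m) g x) (at x)"
    proof (cases "x \<le> 0")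
      case True
      have "((deriv ^^ m) g has_real_derivative 0) (at x)"
        by (rule has_real_derivative_0_if_flat[OF a _ D lim lim True]) (use higher_deriv_zero in blast)
      moreover have "(deriv ^^ Suc m) g x = 0"
        using higher_deriv_zero True by blast
      ultimately show ?thesis by simp
    next
      case False
      then show ?thesis using D x by simp
    qed
  qed
qed

definition flat_exp :: "real \<Rightarrow> real" where
  "flat_exp x = (if x \<le> 0 then 0 else exp (- inverse x))"

lemma poly_times_exp_minus_tendsto_0: "((\<lambda>u. poly p u * exp (- u)) \<longlongrightarrow> (0::real)) at_top"
proof -
  have "((\<lambda>u. \<Sum>i\<le>degree p. coeff p i * (u ^ i / exp u)) \<longlongrightarrow> (0::real)) at_top"
    by (intro tendsto_null_sum tendsto_mult_right_zero tendsto_power_div_exp_0)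
  moreover have "(\<Sum>i\<le>degree p. coeff p i * (u ^ i / exp u)) = poly p u * exp (- u)" for u :: real
    by (simp add: poly_altdef exp_minus divide_inverse sum_distrib_right mult.assoc)
  ultimately show ?thesis by simp
qed

lemma has_real_derivative_poly_inverse_exp:
  assumes "s \<noteq> 0"
  shows "((\<lambda>s. poly p (inverse s) * exp (- inverse s)) has_real_derivative
    poly ([:0, 0, 1:] * (p - pderiv p)) (inverse s) * exp (- inverse s)) (at s)"
  using assms
  by (auto intro!: derivative_eq_intros DERIV_chain2[OF poly_DERIV]
      simp: field_simps power2_eq_square)

lemma higher_deriv_flat_exp:
  "\<exists>p. \<forall>s>0. (deriv ^^ m) flat_exp s = poly p (inverse s) * exp (- inverse s)"
proof (induction m)
  case 0
  show ?case by (intro exI[of _ "[:1:]"]) (simp add: flat_exp_def)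
next
  case (Suc m)
  then obtain p where p: "\<And>s. s > 0 \<Longrightarrow>
      (deriv ^^ m) flat_exp s = poly p (inverse s) * exp (- inverse s)"
    by blast
  have "(deriv ^^ Suc m) flat_exp s =
      poly ([:0, 0, 1:] * (p - pderiv p)) (inverse s) * exp (- inverse s)" if "s > 0" for s
  proof -
    have "((deriv ^^ m) flat_exp has_real_derivative
        poly ([:0, 0, 1:] * (p - pderiv p)) (inverse s) * exp (- inverse s)) (at s)"
      by (rule has_field_derivative_transform_within_open[where S = "{0<..}",
            OF has_real_derivative_poly_inverse_exp]) (use that p in auto)
    then show ?thesis
      by (simp add: DERIV_imp_deriv)
  qed
  then show ?case by blast
qed

lemma smooth_real_on_flat_exp: "smooth_real_on UNIV flat_exp"
proof -
  have "smooth_real_on {0<..} (\<lambda>x. exp ((-1) * inverse x))"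
    by (intro smooth_real_on_compose[OF smooth_real_on_exp] smooth_real_on_mult
        smooth_real_on_const smooth_real_on_inverse smooth_real_on_id) auto
  then have pos: "smooth_real_on {0<..} flat_exp"
    by (rule smooth_real_on_cong[OF open_greaterThan, rotated]) (simp add: flat_exp_def)
  have near_0: "smooth_real_on {..<1} flat_exp"
  proof (rule smooth_real_on_if_flat_at_0)
    show "smooth_real_on {0<..<1} flat_exp"
      using pos by (rule smooth_real_on_subset) auto
    fix m
    obtain p where p: "\<And>s. s > 0 \<Longrightarrow>
        (deriv ^^ m) flat_exp s = poly p (inverse s) * exp (- inverse s)"
      using higher_deriv_flat_exp by blast
    have "((\<lambda>s. poly p (inverse s) * exp (- inverse s)) \<longlongrightarrow> (0::real)) (at_right 0)"
      using filterlim_compose[OF poly_times_exp_minus_tendsto_0 filterlim_inverse_at_top_right]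
      by simp
    moreover have "eventually (\<lambda>s. poly p (inverse s) * exp (- inverse s) =
        (deriv ^^ m) flat_exp s) (at_right 0)"
      unfolding eventually_at_right_field using p by (intro exI[of _ 1]) auto
    ultimately show "((deriv ^^ m) flat_exp \<longlongrightarrow> 0) (at_right 0)"
      by (rule Lim_transform_eventually)
  qed (auto simp: flat_exp_def)
  show ?thesis
  proof (rule smooth_real_on_local[OF open_UNIV])
    fix x :: real
    show "\<exists>N. open N \<and> x \<in> N \<and> smooth_real_on N flat_exp"
    proof (cases "x < 1")
      case True
      with near_0 show ?thesis by (intro exI[of _ "{..<1}"]) auto
    next
      case False
      with pos show ?thesis by (intro exI[of _ "{0<..}"]) auto
    qed
  qed
qed

lemma flat_exp_nonneg: "flat_exp x \<ge> 0"
  by (simp add: flat_exp_def)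

lemma flat_exp_pos: "x > 0 \<Longrightarrow> flat_exp x > 0"
  by (simp add: flat_exp_def)

lemma flat_exp_eq_0: "x \<le> 0 \<Longrightarrow> flat_exp x = 0"
  by (simp add: flat_exp_def)

definition smooth_step :: "real \<Rightarrow> real" where
  "smooth_step x = flat_exp (3 * x - 1) / (flat_exp (3 * x - 1) + flat_exp (2 - 3 * x))"

lemma smooth_step_denominator_pos: "flat_exp (3 * x - 1) + flat_exp (2 - 3 * x) > 0"
  using flat_exp_pos[of "3 * x - 1"] flat_exp_pos[of "2 - 3 * x"]
    flat_exp_nonneg[of "3 * x - 1"] flat_exp_nonneg[of "2 - 3 * x"]
  by linarith

lemma smooth_real_on_smooth_step: "smooth_real_on S smooth_step"
proof -
  have "smooth_real_on S (\<lambda>x. flat_exp (3 * x - 1))" "smooth_real_on S (\<lambda>x. flat_exp (2 - 3 * x))"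
    using smooth_real_on_affine[OF smooth_real_on_flat_exp, of S 3 "-1"]
      smooth_real_on_affine[OF smooth_real_on_flat_exp, of S "-3" 2] by simp_all
  then have "smooth_real_on S (\<lambda>x. flat_exp (3 * x - 1) *
      inverse (flat_exp (3 * x - 1) + flat_exp (2 - 3 * x)))"
    by (intro smooth_real_on_mult smooth_real_on_inverse smooth_real_on_add ballI)
      (use smooth_step_denominator_pos in \<open>metis less_irrefl\<close>)+
  then show ?thesis
    unfolding smooth_step_def by (simp add: divide_inverse)
qed

lemma smooth_step_eq_0: "x \<le> 1/3 \<Longrightarrow> smooth_step x = 0"
  by (simp add: smooth_step_def flat_exp_eq_0)

lemma smooth_step_eq_1: "x \<ge> 2/3 \<Longrightarrow> smooth_step x = 1"
  using smooth_step_denominator_pos[of x] by (simp add: smooth_step_def flat_exp_eq_0)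

lemma smooth_step_bounds: "0 \<le> smooth_step x" "smooth_step x \<le> 1"
  using smooth_step_denominator_pos[of x] flat_exp_nonneg[of "3 * x - 1"]
    flat_exp_nonneg[of "2 - 3 * x"]
  by (simp_all add: smooth_step_def divide_le_eq_1)

lemma higher_deriv_const: "(deriv ^^ Suc m) (\<lambda>_. c) = (\<lambda>_. 0 :: real)"
  by (induction m) auto

lemma smooth_step_higher_deriv_outside:
  assumes "x \<notin> {0..1}"
  shows "(deriv ^^ Suc m) smooth_step x = 0"
proof -
  obtain c :: real where "eventually (\<lambda>y. smooth_step y = c) (nhds x)"
  proof (cases "x < 0")
    case True
    then have "eventually (\<lambda>y. y \<in> {..<1/3}) (nhds x)"
      by (intro eventually_nhds_in_open) auto
    then have "eventually (\<lambda>y. smooth_step y = 0) (nhds x)"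
      by eventually_elim (simp add: smooth_step_eq_0)
    then show ?thesis by (rule that)
  next
    case False
    then have "eventually (\<lambda>y. y \<in> {2/3<..}) (nhds x)"
      using assms by (intro eventually_nhds_in_open) auto
    then have "eventually (\<lambda>y. smooth_step y = 1) (nhds x)"
      by eventually_elim (simp add: smooth_step_eq_1)
    then show ?thesis by (rule that)
  qed
  then have "(deriv ^^ Suc m) smooth_step x = (deriv ^^ Suc m) (\<lambda>_. c) x"
    by (rule higher_deriv_cong_ev) simp
  then show ?thesis
    by (simp only: higher_deriv_const)
qed

lemma smooth_step_higher_deriv_bounded: "\<exists>B. \<forall>x. \<bar>(deriv ^^ m) smooth_step x\<bar> \<le> B"
proof (cases m)
  case 0
  then show ?thesis
    using smooth_step_bounds by (intro exI[of _ 1]) auto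
next
  case (Suc n)
  have "\<forall>x. ((deriv ^^ m) smooth_step has_real_derivative (deriv ^^ Suc m) smooth_step x) (at x)"
    using smooth_real_on_smooth_step smooth_real_on_iff_higher_deriv[of UNIV] by auto
  then have "continuous_on {0..1} ((deriv ^^ m) smooth_step)"
    by (meson DERIV_isCont continuous_at_imp_continuous_on)
  then obtain B where B: "\<And>x. x \<in> {0..1} \<Longrightarrow> \<bar>(deriv ^^ m) smooth_step x\<bar> \<le> B"
    using compact_continuous_image[of "{0..1}"] compact_imp_bounded bounded_iff
    by (metis compact_Icc image_eqI real_norm_def)
  have "\<bar>(deriv ^^ m) smooth_step x\<bar> \<le> B" for x
    using B[of x] B[of 0] smooth_step_higher_deriv_outside[of x n] Suc by fastforce
  then show ?thesis by blast
qed

section \<open>Coordinate space and the chain rule\<close>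

definition cube :: "nat \<Rightarrow> (nat \<Rightarrow> real) \<Rightarrow> real \<Rightarrow> (nat \<Rightarrow> real) set" where
  "cube d z r = {w. \<forall>j<d. \<bar>w j - z j\<bar> < r}"

lemma open_cube: "open (cube d z r)"
proof -
  have "open (\<Inter>j\<in>{..<d}. (\<lambda>w::nat\<Rightarrow>real. w j) -` ball (z j) r)"
    by (intro open_INT ballI open_vimage open_ball continuous_on_product_coordinates) simp
  moreover have "(\<Inter>j\<in>{..<d}. (\<lambda>w::nat\<Rightarrow>real. w j) -` ball (z j) r) = cube d z r"
    by (auto simp: cube_def dist_real_def abs_minus_commute)
  ultimately show ?thesis by simp
qed

lemma cube_mono: "r \<le> r' \<Longrightarrow> cube d z r \<subseteq> cube d z r'"
  by (force simp: cube_def)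

lemma center_in_cube: "r > 0 \<Longrightarrow> z \<in> cube d z r"
  by (simp add: cube_def)

lemma cube_closer:
  assumes "\<forall>j<d. \<bar>w j - z j\<bar> \<le> \<bar>v j - z j\<bar>" "v \<in> cube d z r"
  shows "w \<in> cube d z r"
  using assms by (auto simp: cube_def intro: le_less_trans)

lemma segment_in_cube:
  assumes "a \<in> cube d z r" "b \<in> cube d z r" "0 \<le> t" "t \<le> 1"
  shows "(\<lambda>j. a j + t * (b j - a j)) \<in> cube d z r"
  unfolding cube_def
proof (intro CollectI allI impI)
  fix j assume "j < d"
  then have "\<bar>a j - z j\<bar> < r" "\<bar>b j - z j\<bar> < r"
    using assms(1,2) by (auto simp: cube_def)
  moreover have "a j + t * (b j - a j) - z j = (1 - t) * (a j - z j) + t * (b j - z j)"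
    by (simp add: algebra_simps)
  moreover have "\<bar>(1 - t) * (a j - z j) + t * (b j - z j)\<bar> \<le>
      (1 - t) * \<bar>a j - z j\<bar> + t * \<bar>b j - z j\<bar>"
    using abs_triangle_ineq[of "(1 - t) * (a j - z j)" "t * (b j - z j)"] assms(3,4)
    by (simp add: abs_mult)
  moreover have "(1 - t) * \<bar>a j - z j\<bar> + t * \<bar>b j - z j\<bar> < r"
    by (rule convex_bound_lt) (use calculation assms(3,4) in auto)
  ultimately show "\<bar>a j + t * (b j - a j) - z j\<bar> < r"
    by linarith
qed

lemma segment_in_Rn: "a \<in> Rn d \<Longrightarrow> b \<in> Rn d \<Longrightarrow> (\<lambda>j. a j + t * (b j - a j)) \<in> Rn d"
  by (simp add: Rn_def)

lemma open_contains_cube_Rn: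
  assumes "open W" "z \<in> W" "z \<in> Rn d"
  shows "\<exists>r>0. Rn d \<inter> cube d z r \<subseteq> W"
proof -
  have "openin (product_topology (\<lambda>i. euclidean) UNIV) W"
    using assms(1) by (simp add: open_fun_def)
  from product_topology_open_contains_basis[OF this assms(2)]
  obtain X where X: "z \<in> (\<Pi>\<^sub>E i\<in>UNIV. X i)" "\<And>i. open (X i)" "(\<Pi>\<^sub>E i\<in>UNIV. X i) \<subseteq> W"
    by auto
  have "\<forall>i. \<exists>r>0. ball (z i) r \<subseteq> X i"
    using X(1,2) open_contains_ball by (metis PiE_iff UNIV_I)
  then obtain R where R: "\<And>i. R i > 0" "\<And>i. ball (z i) (R i) \<subseteq> X i"
    by metis
  define r where "r = Min (insert 1 (R ` {..<d}))"
  have r: "r > 0" "\<And>i. i < d \<Longrightarrow> r \<le> R i"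
    using R(1) by (auto simp: r_def)
  have "w \<in> W" if w: "w \<in> Rn d" "w \<in> cube d z r" for w
  proof -
    have "w i \<in> X i" for i
    proof (cases "i < d")
      case True
      then have "w i \<in> ball (z i) (R i)"
        using w r by (force simp: cube_def dist_real_def)
      then show ?thesis using R(2) by blast
    next
      case False
      then have "w i = z i" using w assms(3) by (simp add: Rn_def)
      then show ?thesis using X(1) by auto
    qed
    then show ?thesis using X(3) by auto
  qed
  with r show ?thesis by blast
qed

lemma topspace_Rn_top [simp]: "topspace (Rn_top d) = Rn d"
  by (simp add: Rn_top_def)

lemma openin_Rn_top_subset: "openin (Rn_top d) V \<Longrightarrow> V \<subseteq> Rn d"
  using openin_subset by fastforce

lemma openin_Rn_top_contains_cube:
  assumes "openin (Rn_top d) V" "z \<in> V"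
  shows "\<exists>r>0. Rn d \<inter> cube d z r \<subseteq> V"
proof -
  obtain W where "open W" "V = W \<inter> Rn d"
    using assms(1) unfolding Rn_top_def openin_subtopology by auto
  then show ?thesis
    using open_contains_cube_Rn[of W z d] assms(2) by blast
qed

lemma continuous_on_Rn_cube:
  fixes g :: "(nat \<Rightarrow> real) \<Rightarrow> real"
  assumes "continuous_on V g" "z \<in> V" "V \<subseteq> Rn d" "e > 0"
  shows "\<exists>r>0. \<forall>w\<in>V \<inter> cube d z r. \<bar>g w - g z\<bar> < e"
proof -
  obtain W where W: "open W" "W \<inter> V = g -` ball (g z) e \<inter> V"
    using assms(1) unfolding continuous_on_open_invariant by (meson open_ball)
  have "z \<in> W"
    using W(2) assms(2,4) by auto
  then obtain r where r: "r > 0" "Rn d \<inter> cube d z r \<subseteq> W"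
    using open_contains_cube_Rn[OF W(1)] assms(2,3) by blast
  have "\<bar>g w - g z\<bar> < e" if "w \<in> V \<inter> cube d z r" for w
  proof -
    have "w \<in> W \<inter> V"
      using that r(2) assms(3) by blast
    then have "g w \<in> ball (g z) e"
      using W(2) by blast
    then show ?thesis
      by (simp add: dist_real_def abs_minus_commute)
  qed
  with r(1) show ?thesis by blast
qed

lemma continuous_on_Rn_coordinatewise:
  fixes \<gamma> :: "real \<Rightarrow> nat \<Rightarrow> real"
  assumes "\<And>s. s \<in> S \<Longrightarrow> \<gamma> s \<in> Rn d" "\<And>i. i < d \<Longrightarrow> continuous_on S (\<lambda>s. \<gamma> s i)"
  shows "continuous_on S \<gamma>"
proof (rule continuous_on_coordinatewise_then_product)
  fix i
  show "continuous_on S (\<lambda>s. \<gamma> s i)"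
  proof (cases "i < d")
    case False
    have "continuous_on S (\<lambda>s. 0::real)" by simp
    then show ?thesis
      by (rule continuous_on_eq) (use assms False in \<open>auto simp: Rn_def\<close>)
  qed (use assms in blast)
qed

lemma mean_value_between:
  fixes f f' :: "real \<Rightarrow> real"
  assumes "\<And>t. \<bar>t\<bar> \<le> \<bar>b\<bar> \<Longrightarrow> (f has_real_derivative f' t) (at t)"
  shows "\<exists>\<xi>. \<bar>\<xi>\<bar> \<le> \<bar>b\<bar> \<and> f b - f 0 = b * f' \<xi>"
proof -
  consider "b > 0" | "b < 0" | "b = 0" by linarith
  then show ?thesis
  proof cases
    case 1
    obtain z where "0 < z" "z < b" "f b - f 0 = (b - 0) * f' z"
      using MVT2[OF 1, of f f'] assms by force
    then show ?thesis by (intro exI[of _ z]) auto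
  next
    case 2
    obtain z where "b < z" "z < 0" "f 0 - f b = (0 - b) * f' z"
      using MVT2[OF 2, of f f'] assms by force
    then show ?thesis by (intro exI[of _ z]) (auto simp: algebra_simps)
  qed (auto intro: exI[of _ 0])
qed

lemma mean_value_partials:
  fixes F :: "(nat \<Rightarrow> real) \<Rightarrow> real"
  assumes partial: "\<And>i x. i < d \<Longrightarrow> x \<in> V \<Longrightarrow>
      ((\<lambda>h. F (x(i := x i + h))) has_real_derivative G i x) (at 0)"
    and cube: "Rn d \<inter> cube d x r \<subseteq> V" and x: "x \<in> Rn d" and y: "y \<in> Rn d \<inter> cube d x r"
  shows "\<exists>\<xi>. (\<forall>i<d. \<xi> i \<in> Rn d \<and> (\<forall>j<d. \<bar>\<xi> i j - x j\<bar> \<le> \<bar>y j - x j\<bar>)) \<and>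
    F y - F x = (\<Sum>i<d. (y i - x i) * G i (\<xi> i))"
proof -
  define z where "z i = (\<lambda>j. if j < i then y j else x j)" for i
  define p where "p i t = (z i)(i := x i + t)" for i t
  have z_0: "z 0 = x"
    by (simp add: z_def)
  have z_d: "z d = y"
    using x y by (auto simp: z_def Rn_def fun_eq_iff)
  have p_ends: "p i (y i - x i) = z (Suc i)" "p i 0 = z i" for i
    by (auto simp: p_def z_def fun_eq_iff)
  have p_near: "p i t \<in> Rn d \<and> (\<forall>j<d. \<bar>p i t j - x j\<bar> \<le> \<bar>y j - x j\<bar>)"
    if "i < d" "\<bar>t\<bar> \<le> \<bar>y i - x i\<bar>" for i t
    using that x y by (auto simp: p_def z_def Rn_def)
  have p_in_V: "p i t \<in> V" if "i < d" "\<bar>t\<bar> \<le> \<bar>y i - x i\<bar>" for i t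
    using p_near[OF that] cube_closer[of d "p i t" x y r] y cube by blast
  have "\<exists>\<tau>. \<bar>\<tau>\<bar> \<le> \<bar>y i - x i\<bar> \<and> F (z (Suc i)) - F (z i) = (y i - x i) * G i (p i \<tau>)"
    if "i < d" for i
  proof -
    have "((\<lambda>t. F (p i t)) has_real_derivative G i (p i t)) (at t)"
      if "\<bar>t\<bar> \<le> \<bar>y i - x i\<bar>" for t
    proof -
      have "((\<lambda>h. F ((p i t)(i := p i t i + h))) has_real_derivative G i (p i t)) (at 0)"
        using partial \<open>i < d\<close> p_in_V[OF \<open>i < d\<close> that] by blast
      moreover have "(\<lambda>h. F ((p i t)(i := p i t i + h))) = (\<lambda>h. F (p i (h + t)))"
        by (simp add: p_def algebra_simps)
      ultimately show ?thesis
        using DERIV_shift[of "\<lambda>t. F (p i t)" _ 0 t] by simp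
    qed
    then show ?thesis
      using mean_value_between[of "y i - x i" "\<lambda>t. F (p i t)"] by (simp add: p_ends)
  qed
  then obtain \<tau> where \<tau>: "\<And>i. i < d \<Longrightarrow> \<bar>\<tau> i\<bar> \<le> \<bar>y i - x i\<bar> \<and>
      F (z (Suc i)) - F (z i) = (y i - x i) * G i (p i (\<tau> i))"
    by metis
  have "F y - F x = (\<Sum>i<d. F (z (Suc i)) - F (z i))"
    using sum_lessThan_telescope[of "\<lambda>i. F (z i)" d] by (simp add: z_0 z_d)
  also have "\<dots> = (\<Sum>i<d. (y i - x i) * G i (p i (\<tau> i)))"
    using \<tau> by (intro sum.cong) auto
  finally show ?thesis
    using \<tau> p_near by (intro exI[of _ "\<lambda>i. p i (\<tau> i)"]) auto
qed

lemma eventually_at_in_cube: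
  fixes \<gamma> :: "real \<Rightarrow> nat \<Rightarrow> real"
  assumes "\<And>j. j < d \<Longrightarrow> isCont (\<lambda>s. \<gamma> s j) s0" "\<delta> > 0"
  shows "eventually (\<lambda>s. \<gamma> s \<in> cube d (\<gamma> s0) \<delta>) (at s0)"
proof -
  have "eventually (\<lambda>s. \<bar>\<gamma> s j - \<gamma> s0 j\<bar> < \<delta>) (at s0)" if "j < d" for j
    using assms(1)[OF that] \<open>\<delta> > 0\<close> unfolding isCont_def tendsto_iff dist_real_def by blast
  then have "eventually (\<lambda>s. \<forall>j\<in>{..<d}. \<bar>\<gamma> s j - \<gamma> s0 j\<bar> < \<delta>) (at s0)"
    by (intro eventually_ball_finite) auto
  then show ?thesis
    by eventually_elim (auto simp: cube_def)
qed

lemma tendsto_continuous_on_Rn: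
  fixes G :: "(nat \<Rightarrow> real) \<Rightarrow> real"
  assumes "continuous_on V G" "x \<in> V" "V \<subseteq> Rn d" "r > 0" "Rn d \<inter> cube d x r \<subseteq> V"
    and near: "\<And>\<delta>. \<delta> > 0 \<Longrightarrow> eventually (\<lambda>s. \<xi> s \<in> Rn d \<inter> cube d x \<delta>) F"
  shows "((\<lambda>s. G (\<xi> s)) \<longlongrightarrow> G x) F"
  unfolding tendsto_iff
proof (intro allI impI)
  fix e :: real assume "e > 0"
  then obtain \<rho> where \<rho>: "\<rho> > 0" "\<forall>w\<in>V \<inter> cube d x \<rho>. \<bar>G w - G x\<bar> < e"
    using continuous_on_Rn_cube[OF assms(1-3)] by blast
  have "min \<rho> r > 0"
    using \<rho>(1) assms(4) by simp
  from near[OF this] show "eventually (\<lambda>s. dist (G (\<xi> s)) (G x) < e) F"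
  proof eventually_elim
    case (elim s)
    then have "\<xi> s \<in> Rn d \<inter> cube d x r" "\<xi> s \<in> cube d x \<rho>"
      using cube_mono[of "min \<rho> r" r d x] cube_mono[of "min \<rho> r" \<rho> d x] by auto
    then show ?case
      using \<rho>(2) assms(5) by (auto simp: dist_real_def)
  qed
qed

lemma has_real_derivative_chain_partials:
  fixes F :: "(nat \<Rightarrow> real) \<Rightarrow> real" and \<gamma> :: "real \<Rightarrow> nat \<Rightarrow> real"
  assumes V: "openin (Rn_top d) V"
    and partial: "\<And>i x. i < d \<Longrightarrow> x \<in> V \<Longrightarrow>
      ((\<lambda>h. F (x(i := x i + h))) has_real_derivative G i x) (at 0)"
    and cont: "\<And>i. i < d \<Longrightarrow> continuous_on V (G i)"
    and S: "open S" "s0 \<in> S" "\<And>s. s \<in> S \<Longrightarrow> \<gamma> s \<in> V"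
    and deriv: "\<And>i. i < d \<Longrightarrow> ((\<lambda>s. \<gamma> s i) has_real_derivative \<gamma>' i) (at s0)"
  shows "((\<lambda>s. F (\<gamma> s)) has_real_derivative (\<Sum>i<d. G i (\<gamma> s0) * \<gamma>' i)) (at s0)"
proof -
  define x where "x = \<gamma> s0"
  have VR: "V \<subseteq> Rn d"
    using openin_Rn_top_subset[OF V] .
  have x: "x \<in> V" "x \<in> Rn d"
    using S VR x_def by auto
  obtain r where r: "r > 0" "Rn d \<inter> cube d x r \<subseteq> V"
    using openin_Rn_top_contains_cube[OF V x(1)] by blast
  have near: "eventually (\<lambda>s. s \<in> S \<and> \<gamma> s \<in> Rn d \<inter> cube d x \<delta>) (at s0)" if "\<delta> > 0" for \<delta>
  proof -
    have "eventually (\<lambda>s. \<gamma> s \<in> cube d x \<delta>) (at s0)"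
      unfolding x_def using DERIV_isCont[OF deriv] \<open>\<delta> > 0\<close> by (rule eventually_at_in_cube)
    moreover have "eventually (\<lambda>s. s \<in> S) (at s0)"
      using S(1,2) eventually_at_topological by blast
    ultimately show ?thesis
      by eventually_elim (use S(3) VR in auto)
  qed
  have "\<forall>y\<in>Rn d \<inter> cube d x r. \<exists>\<xi>. (\<forall>i<d. \<xi> i \<in> Rn d \<and> (\<forall>j<d. \<bar>\<xi> i j - x j\<bar> \<le> \<bar>y j - x j\<bar>)) \<and>
      F y - F x = (\<Sum>i<d. (y i - x i) * G i (\<xi> i))"
    using mean_value_partials[OF partial r(2) x(2)] by blast
  from bchoice[OF this] obtain \<Xi> where \<Xi>: "\<forall>y\<in>Rn d \<inter> cube d x r.
      (\<forall>i<d. \<Xi> y i \<in> Rn d \<and> (\<forall>j<d. \<bar>\<Xi> y i j - x j\<bar> \<le> \<bar>y j - x j\<bar>)) \<and>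
      F y - F x = (\<Sum>i<d. (y i - x i) * G i (\<Xi> y i))"
    by blast
  have lim_G: "((\<lambda>s. G i (\<Xi> (\<gamma> s) i)) \<longlongrightarrow> G i x) (at s0)" if i: "i < d" for i
  proof (rule tendsto_continuous_on_Rn[OF cont[OF i] x(1) VR r])
    fix \<delta> :: real assume "\<delta> > 0"
    with r(1) have "min \<delta> r > 0"
      by simp
    from near[OF this] show "eventually (\<lambda>s. \<Xi> (\<gamma> s) i \<in> Rn d \<inter> cube d x \<delta>) (at s0)"
    proof eventually_elim
      case (elim s)
      then have "\<gamma> s \<in> Rn d \<inter> cube d x r" "\<gamma> s \<in> cube d x \<delta>"
        using cube_mono[of "min \<delta> r" r d x] cube_mono[of "min \<delta> r" \<delta> d x] by auto
      with \<Xi> i show ?case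
        using cube_closer by blast
    qed
  qed
  have lim_quotient: "((\<lambda>s. (\<gamma> s i - x i) / (s - s0)) \<longlongrightarrow> \<gamma>' i) (at s0)" if "i < d" for i
    using deriv[OF that] unfolding has_field_derivative_iff x_def by simp
  have "((\<lambda>s. \<Sum>i<d. G i (\<Xi> (\<gamma> s) i) * ((\<gamma> s i - x i) / (s - s0))) \<longlongrightarrow>
      (\<Sum>i<d. G i x * \<gamma>' i)) (at s0)"
    by (intro tendsto_sum tendsto_mult lim_G lim_quotient) auto
  moreover have "eventually (\<lambda>s. (\<Sum>i<d. G i (\<Xi> (\<gamma> s) i) * ((\<gamma> s i - x i) / (s - s0))) =
      (F (\<gamma> s) - F x) / (s - s0)) (at s0)"
    using near[OF r(1)]
  proof eventually_elim
    case (elim s)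
    then have "F (\<gamma> s) - F x = (\<Sum>i<d. (\<gamma> s i - x i) * G i (\<Xi> (\<gamma> s) i))"
      using \<Xi> by blast
    then show ?case
      by (simp add: sum_divide_distrib mult.commute)
  qed
  ultimately show ?thesis
    unfolding has_field_derivative_iff x_def by (rule Lim_transform_eventually)
qed

lemma Ck_imp_continuous_on: "Ck d k V F \<Longrightarrow> continuous_on V F"
  by (cases k) auto

lemma Ck_real_compose_Ck:
  fixes F :: "(nat \<Rightarrow> real) \<Rightarrow> real" and \<gamma> :: "real \<Rightarrow> nat \<Rightarrow> real"
  assumes V: "openin (Rn_top d) V" and S: "open S" "\<And>s. s \<in> S \<Longrightarrow> \<gamma> s \<in> V"
    and smooth: "\<And>i. i < d \<Longrightarrow> smooth_real_on S (\<lambda>s. \<gamma> s i)"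
  shows "Ck d k V F \<Longrightarrow> Ck_real k S (\<lambda>s. F (\<gamma> s))"
proof (induction k arbitrary: F)
  have "continuous_on S \<gamma>"
    using S(2) openin_Rn_top_subset[OF V] smooth smooth_real_on_imp_continuous_on
    by (intro continuous_on_Rn_coordinatewise[of S \<gamma> d]) auto
  then have cont: "continuous_on S (\<lambda>s. F (\<gamma> s))" if "continuous_on V F" for F
    using continuous_on_compose2[OF that] S(2) by blast
  {
    case 0
    then show ?case using cont by simp
  next
    case (Suc k)
    then have "\<forall>i<d. \<exists>g. (\<forall>x\<in>V. ((\<lambda>h. F (x(i := x i + h))) has_real_derivative g x) (at 0))
        \<and> Ck d k V g"
      by simp
    then obtain G where G: "\<And>i. i < d \<Longrightarrow>
        (\<forall>x\<in>V. ((\<lambda>h. F (x(i := x i + h))) has_real_derivative G i x) (at 0)) \<and> Ck d k V (G i)"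
      by metis
    define D where "D s = (\<Sum>i<d. G i (\<gamma> s) * deriv (\<lambda>s. \<gamma> s i) s)" for s
    have "((\<lambda>s. F (\<gamma> s)) has_real_derivative D s) (at s)" if "s \<in> S" for s
      unfolding D_def
    proof (rule has_real_derivative_chain_partials[OF V _ _ S(1) that S(2)])
      show "\<And>i x. i < d \<Longrightarrow> x \<in> V \<Longrightarrow>
          ((\<lambda>h. F (x(i := x i + h))) has_real_derivative G i x) (at 0)"
        using G by blast
      show "\<And>i. i < d \<Longrightarrow> continuous_on V (G i)"
        using G Ck_imp_continuous_on by blast
      show "\<And>i. i < d \<Longrightarrow> ((\<lambda>s. \<gamma> s i) has_real_derivative deriv (\<lambda>s. \<gamma> s i) s) (at s)"
        using smooth_real_on_has_real_derivative[OF S(1) smooth that] by blast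
    qed
    moreover have "Ck_real k S D"
      unfolding D_def
    proof (intro Ck_real_sum Ck_real_mult)
      fix i assume "i \<in> {..<d}"
      then show "Ck_real k S (\<lambda>s. G i (\<gamma> s))" "Ck_real k S (deriv (\<lambda>s. \<gamma> s i))"
        using Suc.IH G smooth_real_on_deriv[OF S(1) smooth] unfolding smooth_real_on_def by auto
    qed simp
    moreover have "continuous_on V F"
      using Suc.prems by simp
    ultimately show ?case
      using cont by auto
  }
qed

section \<open>Charts and smooth curves\<close>

context
  fixes T :: "'a topology" and d :: nat and A and U and \<phi> :: "'a \<Rightarrow> nat \<Rightarrow> real"
  assumes manifold: "smooth_manifold T d A" and chart: "(U, \<phi>) \<in> A"
begin

lemma chart_is_chart: "is_chart T d U \<phi>"
proof -
  have "\<forall>(U, \<phi>)\<in>A. is_chart T d U \<phi>"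
    using manifold by (simp add: smooth_manifold_def)
  with chart show ?thesis by auto
qed

lemma chart_homeomorphic_map:
  "homeomorphic_map (subtopology T U) (subtopology (Rn_top d) (\<phi> ` U)) \<phi>"
  using chart_is_chart by (simp add: is_chart_def)

lemma chart_domain_openin: "openin T U"
  using chart_is_chart by (simp add: is_chart_def)

lemma chart_domain_subset: "U \<subseteq> topspace T"
  using openin_subset[OF chart_domain_openin] .

lemma chart_image_openin: "openin (Rn_top d) (\<phi> ` U)"
  using chart_is_chart by (simp add: is_chart_def)

lemma chart_image_subset: "\<phi> ` U \<subseteq> Rn d"
  using openin_Rn_top_subset[OF chart_image_openin] .

lemma chart_inj_on: "inj_on \<phi> U"
  using homeomorphic_imp_injective_map[OF chart_homeomorphic_map] chart_domain_subset
  by (simp add: Int_absorb1)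

lemma chart_continuous_map: "continuous_map (subtopology T U) euclidean \<phi>"
  using homeomorphic_imp_continuous_map[OF chart_homeomorphic_map]
  unfolding Rn_top_def by (simp add: continuous_map_in_subtopology)

lemma chart_inverse_continuous_map:
  "continuous_map (subtopology (Rn_top d) (\<phi> ` U)) (subtopology T U) (inv_into U \<phi>)"
proof -
  obtain g where g: "homeomorphic_maps (subtopology T U) (subtopology (Rn_top d) (\<phi> ` U)) \<phi> g"
    using chart_homeomorphic_map homeomorphic_map_maps by blast
  show ?thesis
  proof (rule continuous_map_eq)
    show "continuous_map (subtopology (Rn_top d) (\<phi> ` U)) (subtopology T U) g"
      using g unfolding homeomorphic_maps_def by blast
    fix y assume "y \<in> topspace (subtopology (Rn_top d) (\<phi> ` U))"
    then obtain x where "x \<in> U" "y = \<phi> x"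
      using chart_image_subset by auto
    moreover have "g (\<phi> x) = x" if "x \<in> U" for x
      using g that chart_domain_subset unfolding homeomorphic_maps_def by auto
    ultimately show "g y = inv_into U \<phi> y"
      using chart_inj_on by (simp add: inv_into_f_f)
  qed
qed

lemma chart_image_openin_subset:
  assumes "openin T W" "W \<subseteq> U"
  shows "openin (Rn_top d) (\<phi> ` W)"
proof -
  have "openin (subtopology T U) W"
    using assms unfolding openin_subtopology by (intro exI[of _ W]) auto
  then have "openin (subtopology (Rn_top d) (\<phi> ` U)) (\<phi> ` W)"
    using homeomorphic_map_openness[OF chart_homeomorphic_map, of W] assms chart_domain_subset
    by auto
  then show ?thesis
    using openin_trans_full chart_image_openin by blast
qed

lemma chart_preimage_cube_openin: "openin T {y \<in> U. \<phi> y \<in> cube d c r}"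
proof -
  have "openin (subtopology T U) {y \<in> topspace (subtopology T U). \<phi> y \<in> cube d c r}"
    by (rule openin_continuous_map_preimage[OF chart_continuous_map]) (simp add: open_cube)
  then show ?thesis
    using openin_trans_full[OF _ chart_domain_openin] chart_domain_subset
    by (simp add: Int_absorb1)
qed

end

lemma smooth_manifold_chart_at:
  assumes "smooth_manifold T d A" "p \<in> topspace T"
  obtains U \<phi> where "(U, \<phi>) \<in> A" "p \<in> U"
proof -
  have "p \<in> \<Union> (fst ` A)"
    using assms unfolding smooth_manifold_def by blast
  then show ?thesis
    using that by force
qed

lemma smooth_curve_continuous_map: "smooth_curve T d A c \<Longrightarrow> continuous_map euclideanreal T c"
  by (simp add: smooth_curve_def)

definition smooth_in_chart ::
    "nat \<Rightarrow> ('a set \<times> ('a \<Rightarrow> nat \<Rightarrow> real)) set \<Rightarrow> (real \<Rightarrow> 'a) \<Rightarrow> real set \<Rightarrow> bool" where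
  "smooth_in_chart d A c N \<longleftrightarrow> open N \<and>
    (\<exists>U \<phi>. (U, \<phi>) \<in> A \<and> c ` N \<subseteq> U \<and> (\<forall>j<d. smooth_real_on N (\<lambda>s. \<phi> (c s) j)))"

lemma smooth_in_chart_continuous_map:
  assumes manifold: "smooth_manifold T d A" and "smooth_in_chart d A c N"
  shows "continuous_map (subtopology euclideanreal N) T c"
proof -
  obtain U \<phi> where chart: "(U, \<phi>) \<in> A" and "c ` N \<subseteq> U"
    and smooth: "\<forall>j<d. smooth_real_on N (\<lambda>s. \<phi> (c s) j)"
    using assms(2) unfolding smooth_in_chart_def by blast
  have "continuous_on N (\<lambda>s. \<phi> (c s))"
    using chart_image_subset[OF manifold chart] \<open>c ` N \<subseteq> U\<close> smooth
      smooth_real_on_imp_continuous_on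
    by (intro continuous_on_Rn_coordinatewise[of N _ d]) auto
  then have "continuous_map (subtopology euclideanreal N) (subtopology (Rn_top d) (\<phi> ` U))
      (\<lambda>s. \<phi> (c s))"
    unfolding continuous_map_in_subtopology Rn_top_def
    using \<open>c ` N \<subseteq> U\<close> chart_image_subset[OF manifold chart] by auto
  then have "continuous_map (subtopology euclideanreal N) (subtopology T U)
      (inv_into U \<phi> \<circ> (\<lambda>s. \<phi> (c s)))"
    using chart_inverse_continuous_map[OF manifold chart] continuous_map_compose by blast
  then have "continuous_map (subtopology euclideanreal N) T (inv_into U \<phi> \<circ> (\<lambda>s. \<phi> (c s)))"
    using continuous_map_in_subtopology by blast
  then show ?thesis
    by (rule continuous_map_eq)
      (use \<open>c ` N \<subseteq> U\<close> chart_inj_on[OF manifold chart] in \<open>auto simp: inv_into_f_f\<close>)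
qed

lemma smooth_in_chart_transition:
  assumes manifold: "smooth_manifold T d A" and "smooth_in_chart d A c N"
    and chart': "(U', \<psi>) \<in> A" and "open N'" "N' \<subseteq> N" "c ` N' \<subseteq> U'" and "j < d"
  shows "smooth_real_on N' (\<lambda>s. \<psi> (c s) j)"
proof -
  obtain U \<phi> where chart: "(U, \<phi>) \<in> A" and "c ` N \<subseteq> U"
    and smooth: "\<forall>j<d. smooth_real_on N (\<lambda>s. \<phi> (c s) j)"
    using assms(2) unfolding smooth_in_chart_def by blast
  define V where "V = \<phi> ` (U \<inter> U')"
  have V: "openin (Rn_top d) V"
    unfolding V_def using chart_image_openin_subset[OF manifold chart]
      chart_domain_openin[OF manifold chart] chart_domain_openin[OF manifold chart'] by blast
  have "smooth_map_Rn d d V (\<psi> \<circ> inv_into U \<phi>)"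
    using manifold chart chart' unfolding smooth_manifold_def V_def by fast
  then have "Ck d k V (\<lambda>x. (\<psi> \<circ> inv_into U \<phi>) x j)" for k
    unfolding smooth_map_Rn_def using \<open>j < d\<close> by blast
  moreover have "\<phi> (c s) \<in> V" if "s \<in> N'" for s
  proof -
    have "c s \<in> U \<inter> U'"
      using that \<open>c ` N \<subseteq> U\<close> \<open>c ` N' \<subseteq> U'\<close> \<open>N' \<subseteq> N\<close> by auto
    then show ?thesis
      unfolding V_def by (rule imageI)
  qed
  moreover have "smooth_real_on N' (\<lambda>s. \<phi> (c s) i)" if "i < d" for i
    using smooth that \<open>N' \<subseteq> N\<close> smooth_real_on_subset by blast
  ultimately have "Ck_real k N' (\<lambda>s. (\<psi> \<circ> inv_into U \<phi>) (\<phi> (c s)) j)" for k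
    using Ck_real_compose_Ck[OF V \<open>open N'\<close>, of "\<lambda>s. \<phi> (c s)"] by blast
  then have "smooth_real_on N' (\<lambda>s. (\<psi> \<circ> inv_into U \<phi>) (\<phi> (c s)) j)"
    unfolding smooth_real_on_def by blast
  then show ?thesis
    by (rule smooth_real_on_cong[OF \<open>open N'\<close>, rotated])
      (use \<open>c ` N \<subseteq> U\<close> \<open>N' \<subseteq> N\<close> chart_inj_on[OF manifold chart] in
        \<open>auto simp: inv_into_f_f image_subset_iff subset_iff\<close>)
qed

lemma smooth_curve_if_locally_smooth_in_chart:
  assumes manifold: "smooth_manifold T d A"
    and local: "\<And>s. \<exists>N. s \<in> N \<and> smooth_in_chart d A c N"
  shows "smooth_curve T d A c"
  unfolding smooth_curve_def
proof (intro conjI ballI)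
  let ?I = "{N. smooth_in_chart d A c N}"
  show cont: "continuous_map euclideanreal T c"
  proof (rule pasting_lemma[where I = ?I and T = id and f = "\<lambda>_. c"])
    show "openin euclideanreal (id N)" if "N \<in> ?I" for N
      using that by (simp add: smooth_in_chart_def)
    show "continuous_map (subtopology euclideanreal (id N)) T c" if "N \<in> ?I" for N
      using that smooth_in_chart_continuous_map[OF manifold] by simp
    show "\<exists>N. N \<in> ?I \<and> s \<in> id N \<and> c s = c s" for s
      using local by auto
  qed simp
  fix p assume "p \<in> A"
  then obtain U' \<psi> where p: "p = (U', \<psi>)" and chart': "(U', \<psi>) \<in> A"
    by (metis surj_pair)
  have "open (c -` U')"
    using openin_continuous_map_preimage[OF cont chart_domain_openin[OF manifold chart']]
    by (simp add: vimage_def)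
  have "smooth_real_on (c -` U') (\<lambda>s. \<psi> (c s) j)" if "j < d" for j
  proof (rule smooth_real_on_local[OF \<open>open (c -` U')\<close>])
    fix s assume "s \<in> c -` U'"
    obtain N where N: "s \<in> N" "smooth_in_chart d A c N"
      using local by blast
    then have "open (N \<inter> c -` U')"
      using \<open>open (c -` U')\<close> by (auto simp: smooth_in_chart_def)
    moreover have "smooth_real_on (N \<inter> c -` U') (\<lambda>s. \<psi> (c s) j)"
      using smooth_in_chart_transition[OF manifold N(2) chart' calculation _ _ that] by blast
    ultimately show "\<exists>N. open N \<and> s \<in> N \<and> smooth_real_on N (\<lambda>s. \<psi> (c s) j)"
      using N(1) \<open>s \<in> c -` U'\<close> by blast
  qed
  then show "case p of (U, \<phi>) \<Rightarrow> \<forall>j<d. smooth_real_on (c -` U) (\<lambda>s. \<phi> (c s) j)"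
    using p by simp
qed

lemma smooth_curve_imp_locally_smooth_in_chart:
  assumes manifold: "smooth_manifold T d A" and c: "smooth_curve T d A c"
  shows "\<exists>N. s \<in> N \<and> smooth_in_chart d A c N"
proof -
  have cont: "continuous_map euclideanreal T c"
    using c by (rule smooth_curve_continuous_map)
  then have "c s \<in> topspace T"
    by (simp add: continuous_map_def Pi_iff)
  then obtain U \<phi> where chart: "(U, \<phi>) \<in> A" and "c s \<in> U"
    using smooth_manifold_chart_at[OF manifold] by blast
  have "open (c -` U)"
    using openin_continuous_map_preimage[OF cont chart_domain_openin[OF manifold chart]]
    by (simp add: vimage_def)
  moreover have "\<forall>j<d. smooth_real_on (c -` U) (\<lambda>s. \<phi> (c s) j)"
    using c chart unfolding smooth_curve_def by fast
  ultimately show ?thesis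
    using chart \<open>c s \<in> U\<close> unfolding smooth_in_chart_def by (intro exI[of _ "c -` U"]) auto
qed

lemma smooth_in_chart_if_locally_equal:
  assumes manifold: "smooth_manifold T d A" and c': "smooth_curve T d A c'"
    and "open N" "s \<in> N" "\<forall>t\<in>N. c t = c' t"
  shows "\<exists>N'. s \<in> N' \<and> smooth_in_chart d A c N'"
proof -
  obtain N' where "s \<in> N'" "smooth_in_chart d A c' N'"
    using smooth_curve_imp_locally_smooth_in_chart[OF manifold c'] by blast
  then obtain U \<phi> where N': "s \<in> N'" "open N'" and chart: "(U, \<phi>) \<in> A" "c' ` N' \<subseteq> U"
    and smooth: "\<forall>j<d. smooth_real_on N' (\<lambda>s. \<phi> (c' s) j)"
    unfolding smooth_in_chart_def by blast
  have "smooth_real_on (N \<inter> N') (\<lambda>s. \<phi> (c s) j)" if "j < d" for j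
  proof -
    have "smooth_real_on (N \<inter> N') (\<lambda>s. \<phi> (c' s) j)"
      using smooth that by (blast intro: smooth_real_on_subset)
    then show ?thesis
      by (rule smooth_real_on_cong[OF open_Int[OF \<open>open N\<close> N'(2)], rotated])
        (use assms(5) in auto)
  qed
  moreover have "c ` (N \<inter> N') \<subseteq> U"
    using chart(2) assms(5) by auto
  ultimately have "smooth_in_chart d A c (N \<inter> N')"
    unfolding smooth_in_chart_def using chart(1) N'(2) \<open>open N\<close> by blast
  with N'(1) \<open>s \<in> N\<close> show ?thesis
    by blast
qed

lemma smooth_curve_if_locally_equal:
  assumes manifold: "smooth_manifold T d A"
    and "\<And>s. \<exists>N c'. open N \<and> s \<in> N \<and> smooth_curve T d A c' \<and> (\<forall>t\<in>N. c t = c' t)"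
  shows "smooth_curve T d A c"
  using assms smooth_in_chart_if_locally_equal[OF manifold]
  by (metis smooth_curve_if_locally_smooth_in_chart)

lemma smooth_curve_affine:
  assumes manifold: "smooth_manifold T d A" and c: "smooth_curve T d A c"
  shows "smooth_curve T d A (\<lambda>s. c (a * s + b))"
proof (rule smooth_curve_if_locally_smooth_in_chart[OF manifold])
  fix s
  obtain N where "a * s + b \<in> N" "smooth_in_chart d A c N"
    using smooth_curve_imp_locally_smooth_in_chart[OF manifold c] by blast
  then obtain U \<phi> where "a * s + b \<in> N" "open N" and chart: "(U, \<phi>) \<in> A" "c ` N \<subseteq> U"
    and smooth: "\<forall>j<d. smooth_real_on N (\<lambda>s. \<phi> (c s) j)"
    unfolding smooth_in_chart_def by blast
  define N' where "N' = {t. a * t + b \<in> N}"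
  have "continuous_on UNIV (\<lambda>t::real. a * t + b)"
    by (intro continuous_intros)
  then have "open N'"
    using open_vimage[OF \<open>open N\<close>] by (simp add: N'_def vimage_def)
  moreover have "smooth_real_on N' (\<lambda>t. \<phi> (c (a * t + b)) j)" if "j < d" for j
  proof (rule smooth_real_on_compose[OF smooth[rule_format, OF that]])
    show "smooth_real_on N' (\<lambda>t. a * t + b)"
      by (intro smooth_real_on_add smooth_real_on_mult smooth_real_on_const smooth_real_on_id)
  qed (auto simp: N'_def)
  moreover have "(\<lambda>t. c (a * t + b)) ` N' \<subseteq> U"
    using chart(2) by (auto simp: N'_def)
  ultimately have "smooth_in_chart d A (\<lambda>t. c (a * t + b)) N'"
    using chart(1) unfolding smooth_in_chart_def by blast
  moreover have "s \<in> N'"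
    using \<open>a * s + b \<in> N\<close> by (simp add: N'_def)
  ultimately show "\<exists>N. s \<in> N \<and> smooth_in_chart d A (\<lambda>t. c (a * t + b)) N"
    by blast
qed

lemma smooth_curve_const:
  assumes manifold: "smooth_manifold T d A" and "p \<in> topspace T"
  shows "smooth_curve T d A (\<lambda>_. p)"
proof (rule smooth_curve_if_locally_smooth_in_chart[OF manifold])
  obtain U \<phi> where "(U, \<phi>) \<in> A" "p \<in> U"
    using smooth_manifold_chart_at[OF assms] .
  then have "smooth_in_chart d A (\<lambda>_. p) UNIV"
    unfolding smooth_in_chart_def using smooth_real_on_const by fastforce
  then show "\<exists>N. s \<in> N \<and> smooth_in_chart d A (\<lambda>_. p) N" for s
    by blast
qed

section \<open>Joining points of a connected manifold by smooth paths\<close>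

(* Being constant near both ends, such paths can be concatenated and reparametrised smoothly. *)
definition stationary_path ::
    "'a topology \<Rightarrow> nat \<Rightarrow> ('a set \<times> ('a \<Rightarrow> nat \<Rightarrow> real)) set \<Rightarrow> 'a \<Rightarrow> 'a \<Rightarrow> (real \<Rightarrow> 'a) \<Rightarrow> bool"
  where "stationary_path T d A p q \<gamma> \<longleftrightarrow>
    smooth_curve T d A \<gamma> \<and> (\<forall>s\<le>1/3. \<gamma> s = p) \<and> (\<forall>s\<ge>2/3. \<gamma> s = q)"

lemma stationary_path_const:
  "smooth_manifold T d A \<Longrightarrow> p \<in> topspace T \<Longrightarrow> stationary_path T d A p p (\<lambda>_. p)"
  unfolding stationary_path_def using smooth_curve_const by simp

lemma stationary_path_reverse:
  assumes manifold: "smooth_manifold T d A" and "stationary_path T d A p q \<gamma>"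
  shows "stationary_path T d A q p (\<lambda>s. \<gamma> ((-1) * s + 1))"
  using assms smooth_curve_affine[OF manifold, of \<gamma> "-1" 1] unfolding stationary_path_def by auto

lemma stationary_path_join:
  assumes manifold: "smooth_manifold T d A"
    and \<gamma>1: "stationary_path T d A p q \<gamma>1" and \<gamma>2: "stationary_path T d A q r \<gamma>2"
  shows "stationary_path T d A p r
    (\<lambda>s. if s \<le> 1/2 then \<gamma>1 (3 * s + (-2/3)) else \<gamma>2 (3 * s + (-4/3)))"
    (is "stationary_path T d A p r ?\<gamma>")
  unfolding stationary_path_def
proof (intro conjI allI impI)
  have smooth1: "smooth_curve T d A (\<lambda>s. \<gamma>1 (3 * s + (-2/3)))"
    using \<gamma>1 smooth_curve_affine[OF manifold] unfolding stationary_path_def by blast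
  have smooth2: "smooth_curve T d A (\<lambda>s. \<gamma>2 (3 * s + (-4/3)))"
    using \<gamma>2 smooth_curve_affine[OF manifold] unfolding stationary_path_def by blast
  have left: "?\<gamma> t = \<gamma>1 (3 * t + (-2/3))" if "t < 5/9" for t
    using \<gamma>1 \<gamma>2 that unfolding stationary_path_def by auto
  have right: "?\<gamma> t = \<gamma>2 (3 * t + (-4/3))" if "t > 4/9" for t
    using \<gamma>1 \<gamma>2 that unfolding stationary_path_def by auto
  show "smooth_curve T d A ?\<gamma>"
  proof (rule smooth_curve_if_locally_equal[OF manifold])
    fix s :: real
    show "\<exists>N c'. open N \<and> s \<in> N \<and> smooth_curve T d A c' \<and> (\<forall>t\<in>N. ?\<gamma> t = c' t)"
    proof (cases "s < 5/9")
      case True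
      with smooth1 left show ?thesis
        by (intro exI[of _ "{..<5/9}"] exI[of _ "\<lambda>s. \<gamma>1 (3 * s + (-2/3))"]) auto
    next
      case False
      with smooth2 right show ?thesis
        by (intro exI[of _ "{4/9<..}"] exI[of _ "\<lambda>s. \<gamma>2 (3 * s + (-4/3))"]) auto
    qed
  qed
  fix s :: real
  show "s \<le> 1/3 \<Longrightarrow> ?\<gamma> s = p" "s \<ge> 2/3 \<Longrightarrow> ?\<gamma> s = r"
    using \<gamma>1 \<gamma>2 unfolding stationary_path_def by auto
qed

definition chart_segment ::
    "'a set \<Rightarrow> ('a \<Rightarrow> nat \<Rightarrow> real) \<Rightarrow> (nat \<Rightarrow> real) \<Rightarrow> (nat \<Rightarrow> real) \<Rightarrow> real \<Rightarrow> 'a" where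
  "chart_segment U \<phi> a b \<sigma> = inv_into U \<phi> (\<lambda>j. a j + smooth_step \<sigma> * (b j - a j))"

context
  fixes T :: "'a topology" and d :: nat and A and U and \<phi> :: "'a \<Rightarrow> nat \<Rightarrow> real" and a b
  assumes manifold: "smooth_manifold T d A" and chart: "(U, \<phi>) \<in> A"
    and segment: "\<And>t. 0 \<le> t \<Longrightarrow> t \<le> 1 \<Longrightarrow> (\<lambda>j. a j + t * (b j - a j)) \<in> \<phi> ` U"
begin

lemma chart_segment_in_image: "(\<lambda>j. a j + smooth_step \<sigma> * (b j - a j)) \<in> \<phi> ` U"
  using segment smooth_step_bounds by blast

lemma chart_segment_in_domain: "chart_segment U \<phi> a b \<sigma> \<in> U"
  unfolding chart_segment_def using chart_segment_in_image by (rule inv_into_into)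

lemma chart_segment_coordinates: "\<phi> (chart_segment U \<phi> a b \<sigma>) = (\<lambda>j. a j + smooth_step \<sigma> * (b j - a j))"
  unfolding chart_segment_def using chart_segment_in_image by (rule f_inv_into_f)

lemma stationary_path_chart_segment:
  "stationary_path T d A (inv_into U \<phi> a) (inv_into U \<phi> b) (chart_segment U \<phi> a b)"
proof -
  have "smooth_curve T d A (chart_segment U \<phi> a b)"
  proof (rule smooth_curve_if_locally_smooth_in_chart[OF manifold])
    have "smooth_in_chart d A (chart_segment U \<phi> a b) UNIV"
      unfolding smooth_in_chart_def
    proof (intro conjI exI[of _ U] exI[of _ \<phi>] allI impI)
      show "smooth_real_on UNIV (\<lambda>s. \<phi> (chart_segment U \<phi> a b s) j)" for j
        unfolding chart_segment_coordinates
        by (intro smooth_real_on_add smooth_real_on_const smooth_real_on_mult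
            smooth_real_on_smooth_step)
    qed (use chart chart_segment_in_domain in auto)
    then show "\<exists>N. s \<in> N \<and> smooth_in_chart d A (chart_segment U \<phi> a b) N" for s
      by blast
  qed
  then show ?thesis
    unfolding stationary_path_def chart_segment_def
    by (simp add: smooth_step_eq_0 smooth_step_eq_1)
qed

end

lemma stationary_paths_near:
  assumes manifold: "smooth_manifold T d A" and "q \<in> topspace T"
  shows "\<exists>W. openin T W \<and> q \<in> W \<and> (\<forall>y\<in>W. \<exists>\<gamma>. stationary_path T d A q y \<gamma>)"
proof -
  obtain U \<phi> where chart: "(U, \<phi>) \<in> A" and "q \<in> U"
    using smooth_manifold_chart_at[OF assms] .
  obtain r where "r > 0" and r: "Rn d \<inter> cube d (\<phi> q) r \<subseteq> \<phi> ` U"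
    using openin_Rn_top_contains_cube[OF chart_image_openin[OF manifold chart]] \<open>q \<in> U\<close>
    by blast
  define W where "W = {y \<in> U. \<phi> y \<in> cube d (\<phi> q) r}"
  have "\<exists>\<gamma>. stationary_path T d A q y \<gamma>" if "y \<in> W" for y
  proof -
    have "y \<in> U"
      using that W_def by auto
    have "(\<lambda>j. \<phi> q j + t * (\<phi> y j - \<phi> q j)) \<in> \<phi> ` U" if "0 \<le> t" "t \<le> 1" for t
    proof (rule subsetD[OF r], rule IntI)
      show "(\<lambda>j. \<phi> q j + t * (\<phi> y j - \<phi> q j)) \<in> Rn d"
        using chart_image_subset[OF manifold chart] \<open>q \<in> U\<close> \<open>y \<in> U\<close> by (auto intro: segment_in_Rn)
      show "(\<lambda>j. \<phi> q j + t * (\<phi> y j - \<phi> q j)) \<in> cube d (\<phi> q) r"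
        using segment_in_cube[of "\<phi> q" d "\<phi> q" r "\<phi> y" t] \<open>y \<in> W\<close> \<open>r > 0\<close> that
        by (simp add: W_def center_in_cube)
    qed
    from stationary_path_chart_segment[OF manifold chart this]
    show ?thesis
      using \<open>q \<in> U\<close> \<open>y \<in> U\<close> chart_inj_on[OF manifold chart] by (metis inv_into_f_f)
  qed
  moreover have "openin T W"
    unfolding W_def by (rule chart_preimage_cube_openin[OF manifold chart])
  moreover have "q \<in> W"
    using \<open>q \<in> U\<close> \<open>r > 0\<close> by (simp add: W_def center_in_cube)
  ultimately show ?thesis by blast
qed

lemma stationary_path_exists:
  assumes manifold: "smooth_manifold T d A" and "connected_space T"
    and "p \<in> topspace T" and "q \<in> topspace T"
  shows "\<exists>\<gamma>. stationary_path T d A p q \<gamma>"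
proof -
  define C where "C = {q \<in> topspace T. \<exists>\<gamma>. stationary_path T d A p q \<gamma>}"
  have "openin T C"
    unfolding openin_subopen[of T C]
  proof
    fix y assume "y \<in> C"
    then obtain W where W: "openin T W" "y \<in> W" "\<forall>z\<in>W. \<exists>\<gamma>. stationary_path T d A y z \<gamma>"
      using stationary_paths_near[OF manifold] C_def by blast
    have "W \<subseteq> C"
      using W \<open>y \<in> C\<close> stationary_path_join[OF manifold] openin_subset unfolding C_def by blast
    with W show "\<exists>W. openin T W \<and> y \<in> W \<and> W \<subseteq> C"
      by blast
  qed
  moreover have "openin T (topspace T - C)"
    unfolding openin_subopen[of T "topspace T - C"]
  proof
    fix y assume y: "y \<in> topspace T - C"
    then obtain W where W: "openin T W" "y \<in> W" "\<forall>z\<in>W. \<exists>\<gamma>. stationary_path T d A y z \<gamma>"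
      using stationary_paths_near[OF manifold] by blast
    have "W \<inter> C = {}"
      using W y stationary_path_join[OF manifold _ stationary_path_reverse[OF manifold]]
      unfolding C_def by blast
    with W show "\<exists>W. openin T W \<and> y \<in> W \<and> W \<subseteq> topspace T - C"
      using openin_subset by blast
  qed
  moreover have "p \<in> C"
    using stationary_path_const[OF manifold] assms(3) C_def by blast
  ultimately have "C = topspace T"
    using assms(2) unfolding connected_space_clopen_in closedin_def C_def by blast
  then show ?thesis
    using assms(4) C_def by blast
qed

section \<open>A smooth curve through a rapidly converging sequence\<close>

definition dyadic_rescale :: "nat \<Rightarrow> real \<Rightarrow> real" where
  "dyadic_rescale k s = 2 ^ Suc k * s - 1"

definition dyadic_index :: "real \<Rightarrow> nat" where
  "dyadic_index s = (LEAST k. (1/2) ^ Suc k < s)"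

lemma dyadic_rescale_pos_iff: "0 < dyadic_rescale k s \<longleftrightarrow> (1/2) ^ Suc k < s"
  by (simp add: dyadic_rescale_def power_one_over field_simps del: power_Suc)

lemma dyadic_rescale_le_1_iff: "dyadic_rescale k s \<le> 1 \<longleftrightarrow> s \<le> (1/2) ^ k"
  by (simp add: dyadic_rescale_def power_one_over field_simps)

lemma dyadic_rescale_gt_minus_1_iff: "-1 < dyadic_rescale k s \<longleftrightarrow> 0 < s"
  by (simp add: dyadic_rescale_def zero_less_mult_iff)

lemma dyadic_rescale_Suc: "dyadic_rescale (Suc k) s = 2 * dyadic_rescale k s + 1"
  by (simp add: dyadic_rescale_def algebra_simps)

lemma dyadic_rescale_power: "dyadic_rescale k ((1/2) ^ k) = 1"
  by (simp add: dyadic_rescale_def power_one_over)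

lemma dyadic_index_lower:
  assumes "0 < s"
  shows "(1/2) ^ Suc (dyadic_index s) < s"
proof -
  obtain n where "(1/2::real) ^ n < s"
    using real_arch_pow_inv[OF assms, of "1/2"] by auto
  moreover have "(1/2::real) ^ Suc n \<le> (1/2) ^ n"
    by (rule power_decreasing) auto
  ultimately have "(1/2::real) ^ Suc n < s"
    by linarith
  then show ?thesis
    unfolding dyadic_index_def by (rule LeastI)
qed

lemma dyadic_index_eq:
  assumes "(1/2) ^ Suc k < s" "s \<le> (1/2) ^ k"
  shows "dyadic_index s = k"
  unfolding dyadic_index_def
proof (rule Least_equality)
  show "(1/2) ^ Suc k < s" by (fact assms(1))
  fix m assume "(1/2) ^ Suc m < s"
  with assms(2) have "(1/2::real) ^ Suc m < (1/2) ^ k"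
    by linarith
  then have "k < Suc m"
    by (subst (asm) power_strict_decreasing_iff) auto
  then show "k \<le> m"
    by simp
qed

lemma dyadic_index_upper:
  assumes "0 < s" "s \<le> 1"
  shows "s \<le> (1/2) ^ dyadic_index s"
proof (cases "dyadic_index s")
  case (Suc k)
  then have "\<not> (1/2) ^ Suc k < s"
    unfolding dyadic_index_def by (metis lessI not_less_Least)
  with Suc show ?thesis by simp
qed (use assms in simp)

lemma le_dyadic_index:
  assumes "0 < s" "s \<le> (1/2) ^ K"
  shows "K \<le> dyadic_index s"
proof (rule ccontr)
  assume "\<not> K \<le> dyadic_index s"
  then have "(1/2::real) ^ K \<le> (1/2) ^ Suc (dyadic_index s)"
    by (intro power_decreasing) auto
  with dyadic_index_lower[OF assms(1)] assms(2) show False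
    by linarith
qed

lemma higher_deriv_affine_comp:
  assumes "smooth_real_on UNIV h"
  shows "(deriv ^^ Suc m) (\<lambda>s. p + q * h (c * s + e)) s =
    q * c ^ Suc m * (deriv ^^ Suc m) h (c * s + e)"
proof -
  have deriv_h: "((deriv ^^ m) h has_real_derivative (deriv ^^ Suc m) h x) (at x)" for m x
    using assms smooth_real_on_iff_higher_deriv[of UNIV h] by auto
  have "(deriv ^^ Suc m) (\<lambda>s. p + q * h (c * s + e)) =
      (\<lambda>s. q * c ^ Suc m * (deriv ^^ Suc m) h (c * s + e))"
  proof (induction m)
    case 0
    have "((\<lambda>s. p + q * h (c * s + e)) has_real_derivative
        q * c * (deriv ^^ Suc 0) h (c * s + e)) (at s)" for s
      using deriv_h[of 0 "c * s + e"]
      by (auto intro!: derivative_eq_intros DERIV_chain2[where f = h] simp: algebra_simps)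
    then show ?case
      by (auto simp: DERIV_imp_deriv)
  next
    case (Suc m)
    have chain: "((\<lambda>s. (deriv ^^ Suc m) h (c * s + e)) has_real_derivative
        (deriv ^^ Suc (Suc m)) h (c * s + e) * c) (at s)" for s
      by (rule DERIV_chain2[OF deriv_h]) (auto intro!: derivative_eq_intros)
    have "((\<lambda>s. q * c ^ Suc m * (deriv ^^ Suc m) h (c * s + e)) has_real_derivative
        q * c ^ Suc (Suc m) * (deriv ^^ Suc (Suc m)) h (c * s + e)) (at s)" for s
      using DERIV_cmult[where c = "q * c ^ Suc m", OF chain[of s]] by (simp add: algebra_simps)
    then have "deriv (\<lambda>s. q * c ^ Suc m * (deriv ^^ Suc m) h (c * s + e)) =
        (\<lambda>s. q * c ^ Suc (Suc m) * (deriv ^^ Suc (Suc m)) h (c * s + e))"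
      by (auto simp only: DERIV_imp_deriv)
    moreover have "(deriv ^^ Suc (Suc m)) (\<lambda>s. p + q * h (c * s + e)) =
        deriv ((deriv ^^ Suc m) (\<lambda>s. p + q * h (c * s + e)))"
      by (simp only: funpow.simps(2) o_apply)
    ultimately show ?case
      by (simp only: Suc.IH)
  qed
  then show ?thesis by simp
qed

lemma smooth_step_interpolation_higher_deriv_bound:
  assumes "\<forall>x. \<bar>(deriv ^^ m) smooth_step x\<bar> \<le> B" "\<bar>p\<bar> < \<delta>" "\<bar>q\<bar> < 2 * \<delta>"
  shows "\<bar>(deriv ^^ m) (\<lambda>s. p + q * smooth_step (c * s + e)) s\<bar> \<le> (3 + 2 * B) * \<bar>c\<bar> ^ m * \<delta>"
proof -
  have "B \<ge> 0" "\<delta> > 0"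
    using assms(1,2) by (meson abs_ge_zero order.trans, linarith)
  show ?thesis
  proof (cases m)
    case 0
    have "\<bar>q\<bar> * smooth_step (c * s + e) \<le> \<bar>q\<bar>"
      using smooth_step_bounds[of "c * s + e"] by (simp add: mult_left_le)
    then have "\<bar>p + q * smooth_step (c * s + e)\<bar> \<le> \<bar>p\<bar> + \<bar>q\<bar>"
      using smooth_step_bounds[of "c * s + e"] abs_triangle_ineq[of p "q * smooth_step (c * s + e)"]
      by (simp add: abs_mult)
    also have "\<dots> \<le> 3 * \<delta>"
      using assms(2,3) by linarith
    also have "\<dots> \<le> (3 + 2 * B) * \<delta>"
      using \<open>B \<ge> 0\<close> \<open>\<delta> > 0\<close> by (intro mult_right_mono) auto
    finally show ?thesis using 0 by simp
  next
    case (Suc n)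
    have "\<bar>(deriv ^^ m) (\<lambda>s. p + q * smooth_step (c * s + e)) s\<bar> =
        \<bar>q\<bar> * \<bar>c\<bar> ^ m * \<bar>(deriv ^^ m) smooth_step (c * s + e)\<bar>"
      using higher_deriv_affine_comp[OF smooth_real_on_smooth_step, of n p q c e] Suc
      by (simp add: abs_mult power_abs)
    also have "\<dots> \<le> (2 * \<delta>) * \<bar>c\<bar> ^ m * B"
      using assms by (intro mult_mono) auto
    also have "\<dots> \<le> (3 + 2 * B) * \<bar>c\<bar> ^ m * \<delta>"
      using \<open>\<delta> > 0\<close> by (simp add: mult_right_mono algebra_simps)
    finally show ?thesis .
  qed
qed

lemma exponential_times_superexponential_tendsto_0:
  "((\<lambda>k. (2 ^ Suc k) ^ m * (1/2) ^ (k * k)) \<longlongrightarrow> (0::real)) sequentially"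
proof (rule Lim_null_comparison)
  have "(2 ^ Suc k) ^ m * (1/2) ^ (k * k) \<le> 2 ^ m * (1/2::real) ^ k" if "Suc m \<le> k" for k
  proof -
    have "2 ^ m * (1/2) ^ k = (1/2::real) ^ (k - m)"
      using that by (simp add: power_diff power_one_over)
    also have "\<dots> \<le> 1/2"
      using power_decreasing[of 1 "k - m" "1/2::real"] that by simp
    finally have "(2 ^ m * (1/2) ^ k) ^ k \<le> (1/2::real) ^ k"
      by (intro power_mono) auto
    moreover have "(2 ^ Suc k) ^ m * (1/2) ^ (k * k) = 2 ^ m * (2 ^ m * (1/2::real) ^ k) ^ k"
      by (simp add: power_mult power_mult_distrib mult_ac flip: power_mult)
    ultimately show ?thesis by simp
  qed
  then show "eventually (\<lambda>k. norm ((2 ^ Suc k) ^ m * (1/2) ^ (k * k) :: real) \<le> 2 ^ m * (1/2) ^ k)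
      sequentially"
    unfolding eventually_sequentially by (intro exI[of _ "Suc m"]) auto
  show "((\<lambda>k. 2 ^ m * (1/2::real) ^ k) \<longlongrightarrow> 0) sequentially"
    by (intro tendsto_mult_right_zero LIMSEQ_power_zero) simp
qed

lemma smooth_real_on_dyadic_rescale: "smooth_real_on S (dyadic_rescale k)"
proof -
  have "smooth_real_on S (\<lambda>s. 2 ^ Suc k * s + (-1))"
    by (intro smooth_real_on_add smooth_real_on_mult smooth_real_on_const smooth_real_on_id)
  then show ?thesis
    by (simp add: dyadic_rescale_def[abs_def])
qed

locale fast_sequence_in_chart =
  fixes T :: "'a topology" and d :: nat and A and x :: 'a and y :: "nat \<Rightarrow> 'a"
    and U and \<phi> :: "'a \<Rightarrow> nat \<Rightarrow> real" and k0 :: nat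
  assumes manifold: "smooth_manifold T d A" and connected: "connected_space T"
    and x: "x \<in> topspace T" and y: "\<And>k. y k \<in> topspace T"
    and chart: "(U, \<phi>) \<in> A" and x_in_chart: "x \<in> U"
    and cube_in_chart: "Rn d \<inter> cube d (\<phi> x) ((1/2) ^ (k0 * k0)) \<subseteq> \<phi> ` U"
    and fast: "\<And>k. k0 < k \<Longrightarrow> y k \<in> U \<and> \<phi> (y k) \<in> cube d (\<phi> x) ((1/2) ^ (k * k))"
begin

definition piece :: "nat \<Rightarrow> real \<Rightarrow> 'a" where
  "piece k = (if k0 < k then chart_segment U \<phi> (\<phi> (y (Suc k))) (\<phi> (y k))
    else (SOME \<gamma>. stationary_path T d A (y (Suc k)) (y k) \<gamma>))"

definition curve :: "real \<Rightarrow> 'a" where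
  "curve s = (if s \<le> 0 then x else if 1 < s then y 0
    else piece (dyadic_index s) (dyadic_rescale (dyadic_index s) s))"

(* On the part of window k outside [2^-(k+1), 2^-k] the neighbouring pieces are constant,
   so curve still follows piece k there. *)
definition window :: "nat \<Rightarrow> real set" where
  "window k = {s. -1/6 < dyadic_rescale k s \<and> dyadic_rescale k s < 7/6}"

lemma fast_in_chart_cube:
  assumes "k0 < k"
  shows "\<phi> (y k) \<in> Rn d \<inter> cube d (\<phi> x) ((1/2) ^ (k0 * k0))"
proof -
  have "(1/2::real) ^ (k * k) \<le> (1/2) ^ (k0 * k0)"
    using assms by (intro power_decreasing mult_mono) auto
  then show ?thesis
    using fast[OF assms] chart_image_subset[OF manifold chart] cube_mono by blast
qed

lemma segment_between_fast_in_chart: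
  assumes "k0 < k" "0 \<le> t" "t \<le> 1"
  shows "(\<lambda>j. \<phi> (y (Suc k)) j + t * (\<phi> (y k) j - \<phi> (y (Suc k)) j)) \<in> \<phi> ` U"
  using fast_in_chart_cube[of k] fast_in_chart_cube[of "Suc k"] assms
  by (intro subsetD[OF cube_in_chart] IntI segment_in_Rn segment_in_cube) auto

lemma stationary_path_piece: "stationary_path T d A (y (Suc k)) (y k) (piece k)"
proof (cases "k0 < k")
  case True
  then have "y (Suc k) \<in> U" "y k \<in> U"
    using fast by auto
  with stationary_path_chart_segment[OF manifold chart segment_between_fast_in_chart[OF True]]
  show ?thesis
    using True chart_inj_on[OF manifold chart] by (simp add: piece_def inv_into_f_f)
next
  case False
  have "\<exists>\<gamma>. stationary_path T d A (y (Suc k)) (y k) \<gamma>"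
    using stationary_path_exists[OF manifold connected y y] .
  with False show ?thesis
    unfolding piece_def by (simp add: someI_ex)
qed

lemma piece_start: "\<sigma> \<le> 1/3 \<Longrightarrow> piece k \<sigma> = y (Suc k)"
  using stationary_path_piece unfolding stationary_path_def by blast

lemma piece_end: "\<sigma> \<ge> 2/3 \<Longrightarrow> piece k \<sigma> = y k"
  using stationary_path_piece unfolding stationary_path_def by blast

lemma smooth_curve_piece: "smooth_curve T d A (piece k)"
  using stationary_path_piece unfolding stationary_path_def by blast

lemma chart_piece:
  assumes "k0 < k"
  shows "piece k \<sigma> \<in> U"
    "\<phi> (piece k \<sigma>) = (\<lambda>j. \<phi> (y (Suc k)) j + smooth_step \<sigma> * (\<phi> (y k) j - \<phi> (y (Suc k)) j))"
  using chart_segment_in_domain[OF manifold chart segment_between_fast_in_chart[OF assms]]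
    chart_segment_coordinates[OF manifold chart segment_between_fast_in_chart[OF assms]] assms
  by (simp_all add: piece_def)

lemma curve_0: "curve 0 = x"
  by (simp add: curve_def)

lemma curve_power: "curve ((1/2) ^ k) = y k"
proof -
  have "dyadic_index ((1/2) ^ k) = k"
    by (rule dyadic_index_eq) simp_all
  moreover have "(1/2::real) ^ k \<le> 1" "\<not> (1/2::real) ^ k \<le> 0"
    by (simp_all add: power_le_one not_le)
  ultimately show ?thesis
    by (simp add: curve_def dyadic_rescale_power piece_end)
qed

lemma open_window: "open (window k)"
  unfolding window_def dyadic_rescale_def
  by (intro open_Collect_conj open_Collect_less continuous_intros)

lemma in_window:
  assumes "0 < s" "s \<le> 1"
  shows "s \<in> window (dyadic_index s)"
proof -
  have "0 < dyadic_rescale (dyadic_index s) s" "dyadic_rescale (dyadic_index s) s \<le> 1"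
    using dyadic_index_lower[of s] dyadic_index_upper[of s] assms
    by (simp_all add: dyadic_rescale_pos_iff dyadic_rescale_le_1_iff)
  then show ?thesis
    unfolding window_def by simp
qed

lemma curve_eq_piece_dyadic_index:
  assumes "0 < dyadic_rescale k s" "dyadic_rescale k s \<le> 1"
  shows "curve s = piece k (dyadic_rescale k s)"
proof -
  have "dyadic_index s = k"
    using assms by (intro dyadic_index_eq) (simp_all add: dyadic_rescale_pos_iff dyadic_rescale_le_1_iff)
  moreover have "0 < s"
    using assms(1) dyadic_rescale_gt_minus_1_iff[of k s] by linarith
  moreover have "(1/2::real) ^ k \<le> 1"
    by (simp add: power_le_one)
  then have "s \<le> 1"
    using assms(2) by (simp add: dyadic_rescale_le_1_iff)
  ultimately show ?thesis
    by (simp add: curve_def)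
qed

lemma curve_eq_piece:
  assumes "s \<in> window k"
  shows "curve s = piece k (dyadic_rescale k s)"
proof -
  define \<sigma> where "\<sigma> = dyadic_rescale k s"
  have \<sigma>: "-1/6 < \<sigma>" "\<sigma> < 7/6"
    using assms by (simp_all add: window_def \<sigma>_def)
  consider "0 < \<sigma> \<and> \<sigma> \<le> 1" | "\<sigma> \<le> 0" | "1 < \<sigma>"
    by linarith
  then show ?thesis
  proof cases
    case 1
    then show ?thesis
      using curve_eq_piece_dyadic_index \<sigma>_def by blast
  next
    case 2
    have "dyadic_rescale (Suc k) s = 2 * \<sigma> + 1"
      by (simp add: \<sigma>_def dyadic_rescale_Suc)
    with 2 \<sigma> curve_eq_piece_dyadic_index[of "Suc k"] show ?thesis
      by (simp add: \<sigma>_def[symmetric] piece_start piece_end)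
  next
    case 3
    then have piece_k: "piece k (dyadic_rescale k s) = y k"
      by (simp add: \<sigma>_def piece_end)
    show ?thesis
    proof (cases k)
      case 0
      then have "1 < s"
        using 3 by (simp add: \<sigma>_def dyadic_rescale_def)
      with piece_k 0 show ?thesis
        by (simp add: curve_def)
    next
      case (Suc k')
      then have "dyadic_rescale k' s = (\<sigma> - 1) / 2"
        by (simp add: \<sigma>_def dyadic_rescale_Suc)
      with 3 \<sigma> curve_eq_piece_dyadic_index[of k'] Suc piece_k show ?thesis
        by (simp add: piece_start)
    qed
  qed
qed

definition coord :: "nat \<Rightarrow> real \<Rightarrow> real" where
  "coord j s = \<phi> (curve s) j - \<phi> x j"

definition near_0 :: real where
  "near_0 = (1/2) ^ Suc k0"

lemma near_0_pos: "0 < near_0"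
  by (simp add: near_0_def)

lemma dyadic_index_near_0:
  assumes "0 < s" "s < near_0"
  shows "k0 < dyadic_index s" "s \<le> 1"
proof -
  show "k0 < dyadic_index s"
    using le_dyadic_index[of s "Suc k0"] assms by (simp add: near_0_def)
  have "near_0 \<le> 1"
    unfolding near_0_def by (rule power_le_one) auto
  with assms show "s \<le> 1" by simp
qed

lemma coord_eq_interpolation:
  assumes "k0 < k" "s \<in> window k"
  shows "coord j s = (\<phi> (y (Suc k)) j - \<phi> x j) +
    (\<phi> (y k) j - \<phi> (y (Suc k)) j) * smooth_step (dyadic_rescale k s)"
  using curve_eq_piece[OF assms(2)] chart_piece(2)[OF assms(1)] by (simp add: coord_def)

lemma coord_eq_0: "s \<le> 0 \<Longrightarrow> coord j s = 0"
  by (simp add: coord_def curve_def)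

lemma smooth_real_on_coord: "smooth_real_on {0<..<near_0} (coord j)"
proof (rule smooth_real_on_local[OF open_greaterThanLessThan])
  fix s assume s: "s \<in> {0<..<near_0}"
  define k where "k = dyadic_index s"
  have "k0 < k" "s \<in> window k"
    using dyadic_index_near_0[of s] in_window[of s] s by (auto simp: k_def)
  have "smooth_real_on (window k) (\<lambda>t. (\<phi> (y (Suc k)) j - \<phi> x j) +
      (\<phi> (y k) j - \<phi> (y (Suc k)) j) * smooth_step (dyadic_rescale k t))"
    by (intro smooth_real_on_add smooth_real_on_mult smooth_real_on_const
        smooth_real_on_compose[OF smooth_real_on_smooth_step smooth_real_on_dyadic_rescale]) auto
  then have "smooth_real_on (window k) (coord j)"
    by (rule smooth_real_on_cong[OF open_window, rotated])
      (simp add: coord_eq_interpolation[OF \<open>k0 < k\<close>])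
  then show "\<exists>N. open N \<and> s \<in> N \<and> smooth_real_on N (coord j)"
    using open_window \<open>s \<in> window k\<close> by blast
qed

lemma coord_higher_deriv_bound:
  assumes B: "\<forall>t. \<bar>(deriv ^^ m) smooth_step t\<bar> \<le> B" and "j < d" and s: "0 < s" "s < near_0"
  shows "\<bar>(deriv ^^ m) (coord j) s\<bar> \<le>
    (3 + 2 * B) * (2 ^ Suc (dyadic_index s)) ^ m * (1/2) ^ (dyadic_index s * dyadic_index s)"
proof -
  define k where "k = dyadic_index s"
  have "k0 < k" "s \<in> window k"
    using dyadic_index_near_0[OF s] in_window[of s] s by (auto simp: k_def)
  define p where "p = \<phi> (y (Suc k)) j - \<phi> x j"
  define q where "q = \<phi> (y k) j - \<phi> (y (Suc k)) j"
  have "eventually (\<lambda>t. coord j t = p + q * smooth_step (2 ^ Suc k * t + (-1))) (nhds s)"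
    using eventually_nhds_in_open[OF open_window \<open>s \<in> window k\<close>]
    by eventually_elim (simp add: coord_eq_interpolation[OF \<open>k0 < k\<close>] p_def q_def dyadic_rescale_def)
  then have "(deriv ^^ m) (coord j) s = (deriv ^^ m) (\<lambda>t. p + q * smooth_step (2 ^ Suc k * t + (-1))) s"
    by (rule higher_deriv_cong_ev) simp
  moreover have "\<bar>p\<bar> < (1/2) ^ (k * k)" "\<bar>q\<bar> < 2 * (1/2) ^ (k * k)"
  proof -
    have "(1/2::real) ^ (Suc k * Suc k) \<le> (1/2) ^ (k * k)"
      by (intro power_decreasing mult_mono) auto
    moreover have "\<bar>p\<bar> < (1/2) ^ (Suc k * Suc k)" "\<bar>\<phi> (y k) j - \<phi> x j\<bar> < (1/2) ^ (k * k)"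
      using fast[of "Suc k"] fast[of k] \<open>k0 < k\<close> \<open>j < d\<close> by (auto simp: cube_def p_def)
    ultimately show "\<bar>p\<bar> < (1/2) ^ (k * k)" "\<bar>q\<bar> < 2 * (1/2) ^ (k * k)"
      unfolding q_def p_def by linarith+
  qed
  ultimately show ?thesis
    using smooth_step_interpolation_higher_deriv_bound[OF B, of p _ q "2 ^ Suc k" "-1" s]
    by (simp add: k_def)
qed

lemma coord_higher_deriv_tendsto_0:
  assumes "j < d"
  shows "((deriv ^^ m) (coord j) \<longlongrightarrow> 0) (at_right 0)"
  unfolding tendsto_iff
proof (intro allI impI)
  fix e :: real assume "e > 0"
  obtain B where B: "\<forall>t. \<bar>(deriv ^^ m) smooth_step t\<bar> \<le> B"
    using smooth_step_higher_deriv_bounded by blast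
  define C where "C = 3 + 2 * B"
  have "((\<lambda>k. C * ((2 ^ Suc k) ^ m * (1/2) ^ (k * k))) \<longlongrightarrow> (0::real)) sequentially"
    by (intro tendsto_mult_right_zero exponential_times_superexponential_tendsto_0)
  with \<open>e > 0\<close> obtain K where K: "\<And>k. K \<le> k \<Longrightarrow> \<bar>C * ((2 ^ Suc k) ^ m * (1/2) ^ (k * k))\<bar> < e"
    unfolding tendsto_iff eventually_sequentially by force
  show "eventually (\<lambda>s. dist ((deriv ^^ m) (coord j) s) 0 < e) (at_right 0)"
    unfolding eventually_at_right_field
  proof (intro exI[of _ "min near_0 ((1/2) ^ K)"] conjI allI impI)
    show "0 < min near_0 ((1/2) ^ K)"
      using near_0_pos by simp
    fix s :: real assume s: "0 < s" "s < min near_0 ((1/2) ^ K)"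
    then have "K \<le> dyadic_index s"
      by (intro le_dyadic_index) auto
    then have "C * ((2 ^ Suc (dyadic_index s)) ^ m * (1/2) ^ (dyadic_index s * dyadic_index s)) < e"
      using K by fastforce
    moreover have "\<bar>(deriv ^^ m) (coord j) s\<bar> \<le>
        C * ((2 ^ Suc (dyadic_index s)) ^ m * (1/2) ^ (dyadic_index s * dyadic_index s))"
      using coord_higher_deriv_bound[OF B assms, of s] s by (simp add: C_def mult.assoc)
    ultimately show "dist ((deriv ^^ m) (coord j) s) 0 < e"
      by (simp add: dist_real_def)
  qed
qed

lemma smooth_in_chart_curve_near_0: "smooth_in_chart d A curve {..<near_0}"
  unfolding smooth_in_chart_def
proof (intro conjI exI[of _ U] exI[of _ \<phi>] allI impI)
  show "curve ` {..<near_0} \<subseteq> U"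
  proof
    fix p assume "p \<in> curve ` {..<near_0}"
    then obtain s where s: "s < near_0" "p = curve s"
      by auto
    show "p \<in> U"
    proof (cases "s \<le> 0")
      case True
      then show ?thesis using s x_in_chart by (simp add: curve_def)
    next
      case False
      with s dyadic_index_near_0[of s] show ?thesis
        using chart_piece(1) by (simp add: curve_def)
    qed
  qed
  fix j assume "j < d"
  have "smooth_real_on {..<near_0} (coord j)"
    by (rule smooth_real_on_if_flat_at_0[OF near_0_pos coord_eq_0 smooth_real_on_coord
          coord_higher_deriv_tendsto_0[OF \<open>j < d\<close>]])
  then have "smooth_real_on {..<near_0} (\<lambda>s. coord j s + \<phi> x j)"
    by (intro smooth_real_on_add smooth_real_on_const)
  then show "smooth_real_on {..<near_0} (\<lambda>s. \<phi> (curve s) j)"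
    by (simp add: coord_def)
qed (use chart in auto)

lemma smooth_curve_curve: "smooth_curve T d A curve"
proof (rule smooth_curve_if_locally_smooth_in_chart[OF manifold])
  fix s :: real
  consider "s < near_0" | "0 < s \<and> s \<le> 1" | "1 < s"
    using near_0_pos by linarith
  then show "\<exists>N. s \<in> N \<and> smooth_in_chart d A curve N"
  proof cases
    case 1
    then show ?thesis
      using smooth_in_chart_curve_near_0 by blast
  next
    case 2
    define k where "k = dyadic_index s"
    have "smooth_curve T d A (\<lambda>t. piece k (2 ^ Suc k * t + (-1)))"
      by (rule smooth_curve_affine[OF manifold smooth_curve_piece])
    moreover have "\<forall>t\<in>window k. curve t = piece k (2 ^ Suc k * t + (-1))"
      using curve_eq_piece by (simp add: dyadic_rescale_def)
    ultimately show ?thesis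
      using smooth_in_chart_if_locally_equal[OF manifold _ open_window] in_window[of s] 2 k_def
      by blast
  next
    case 3
    have "\<forall>t\<in>{1<..}. curve t = y 0"
      by (simp add: curve_def)
    then show ?thesis
      using smooth_in_chart_if_locally_equal[OF manifold smooth_curve_const[OF manifold y]
          open_greaterThan] 3 by blast
  qed
qed

end

lemma smooth_curve_through_fast_sequence:
  assumes manifold: "smooth_manifold T d A" and "connected_space T"
    and "x \<in> topspace T" and "\<And>k. y k \<in> topspace T"
    and chart: "(U, \<phi>) \<in> A" and "x \<in> U"
    and fast: "\<And>k. k0 < k \<Longrightarrow> y k \<in> U \<and> \<phi> (y k) \<in> cube d (\<phi> x) ((1/2) ^ (k * k))"
  shows "\<exists>c. smooth_curve T d A c \<and> c 0 = x \<and> (\<forall>k. c ((1/2) ^ k) = y k)"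
proof -
  obtain r where "r > 0" and r: "Rn d \<inter> cube d (\<phi> x) r \<subseteq> \<phi> ` U"
    using openin_Rn_top_contains_cube[OF chart_image_openin[OF manifold chart]] \<open>x \<in> U\<close>
    by blast
  obtain k1 where "(1/2::real) ^ k1 < r"
    using real_arch_pow_inv[OF \<open>r > 0\<close>, of "1/2"] by auto
  define k2 where "k2 = max k0 k1"
  have "k1 \<le> k2 * k2"
    using le_square[of k2] by (simp add: k2_def)
  then have "(1/2::real) ^ (k2 * k2) \<le> (1/2) ^ k1"
    by (intro power_decreasing) auto
  with \<open>(1/2::real) ^ k1 < r\<close> have "(1/2::real) ^ (k2 * k2) \<le> r"
    by linarith
  then have "Rn d \<inter> cube d (\<phi> x) ((1/2) ^ (k2 * k2)) \<subseteq> \<phi> ` U"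
    using r cube_mono[of "(1/2) ^ (k2 * k2)" r d "\<phi> x"] by blast
  then interpret fast_sequence_in_chart T d A x y U \<phi> k2
    using assms by unfold_locales (auto simp: k2_def)
  show ?thesis
    using smooth_curve_curve curve_0 curve_power by blast
qed

section \<open>Continuity of smooth functions on the product\<close>

lemma continuous_map_if_neighbourhood_sequences:
  fixes f :: "'b \<Rightarrow> real"
  assumes "\<And>x. x \<in> topspace X \<Longrightarrow> \<exists>W. (\<forall>k. openin X (W k) \<and> x \<in> W k) \<and>
      (\<forall>y. (\<forall>k. y k \<in> W k) \<longrightarrow> (\<lambda>k. f (y k)) \<longlonglongrightarrow> f x)"
  shows "continuous_map X euclideanreal f"
  unfolding continuous_map_atin
proof
  fix x assume "x \<in> topspace X"
  then obtain W where W: "\<forall>k. openin X (W k) \<and> x \<in> W k"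
    and lim: "\<forall>y. (\<forall>k. y k \<in> W k) \<longrightarrow> (\<lambda>k. f (y k)) \<longlonglongrightarrow> f x"
    using assms by blast
  have "eventually (\<lambda>z. dist (f z) (f x) < e) (atin X x)" if "e > 0" for e
  proof (rule ccontr)
    assume not_near: "\<not> eventually (\<lambda>z. dist (f z) (f x) < e) (atin X x)"
    have "\<exists>z. z \<in> W k \<and> \<not> dist (f z) (f x) < e" for k
      using not_near W unfolding eventually_atin by blast
    then obtain y where y: "\<And>k. y k \<in> W k" "\<And>k. \<not> dist (f (y k)) (f x) < e"
      by metis
    have "(\<lambda>k. f (y k)) \<longlonglongrightarrow> f x"
      using lim y(1) by blast
    then obtain N where "\<And>n. N \<le> n \<Longrightarrow> dist (f (y n)) (f x) < e"
      using \<open>e > 0\<close> unfolding tendsto_iff eventually_sequentially by blast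
    with y(2) show False
      by blast
  qed
  then show "limitin euclideanreal f (f x) (atin X x)"
    by (simp add: tendsto_iff)
qed
lemma product_chart_neighbourhoods:
  assumes manifold: "\<And>t. smooth_manifold (T t) (d t) (A t)"
    and x: "x \<in> topspace (product_topology T UNIV)"
  obtains U \<phi> W where "\<And>t. (U t, \<phi> t) \<in> A t" "\<And>t. x t \<in> U t"
    "\<And>k. openin (product_topology T UNIV) (W k)" "\<And>k. x \<in> W k"
    "\<And>k. W k \<subseteq> topspace (product_topology T UNIV)"
    "\<And>k y t. y \<in> W k \<Longrightarrow> t < k \<Longrightarrow>
      y t \<in> U t \<and> \<phi> t (y t) \<in> cube (d t) (\<phi> t (x t)) ((1/2) ^ (k * k))"
proof -
  have "\<exists>U \<phi>. (U, \<phi>) \<in> A t \<and> x t \<in> U" for t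
  proof -
    have "x t \<in> topspace (T t)"
      using x by (simp add: PiE_iff)
    then obtain U \<phi> where "(U, \<phi>) \<in> A t" "x t \<in> U"
      using smooth_manifold_chart_at[OF manifold] by blast
    then show ?thesis
      by blast
  qed
  then obtain U \<phi> where chart: "\<And>t. (U t, \<phi> t) \<in> A t" "\<And>t. x t \<in> U t"
    by metis
  define B where "B t k = {p \<in> U t. \<phi> t p \<in> cube (d t) (\<phi> t (x t)) ((1/2) ^ (k * k))}" for t k
  define W where "W k = (\<Inter>t\<in>{..<k}. {y \<in> topspace (product_topology T UNIV). y t \<in> B t k})
    \<inter> topspace (product_topology T UNIV)" for k
  have "openin (product_topology T UNIV) (W k)" for k
    unfolding W_def
  proof (rule openin_INT)
    fix t
    have "openin (T t) (B t k)"
      unfolding B_def by (rule chart_preimage_cube_openin[OF manifold chart(1)])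
    then show "openin (product_topology T UNIV) {y \<in> topspace (product_topology T UNIV). y t \<in> B t k}"
      by (intro openin_continuous_map_preimage[OF continuous_map_product_projection]) auto
  qed simp
  moreover have "x \<in> W k" for k
    using x chart(2) by (simp add: W_def B_def center_in_cube)
  moreover have "W k \<subseteq> topspace (product_topology T UNIV)" for k
    by (simp add: W_def)
  moreover have "y t \<in> U t \<and> \<phi> t (y t) \<in> cube (d t) (\<phi> t (x t)) ((1/2) ^ (k * k))"
    if "y \<in> W k" "t < k" for k y t
    using that by (simp add: W_def B_def)
  ultimately show ?thesis
    by (rule that[OF chart])
qed

lemma structure_curve_through_fast_sequence:
  assumes manifold: "\<And>t. smooth_manifold (T t) (d t) (A t)" and "\<And>t. connected_space (T t)"
    and "x \<in> topspace (product_topology T UNIV)"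
    and "\<And>k. y k \<in> topspace (product_topology T UNIV)"
    and "\<And>t. (U t, \<phi> t) \<in> A t" "\<And>t. x t \<in> U t"
    and "\<And>k t. t < k \<Longrightarrow> y k t \<in> U t \<and> \<phi> t (y k t) \<in> cube (d t) (\<phi> t (x t)) ((1/2) ^ (k * k))"
  shows "\<exists>c. structure_curve T d A c \<and> c 0 = x \<and> (\<forall>k. c ((1/2) ^ k) = y k)"
proof -
  have "\<exists>c. smooth_curve (T t) (d t) (A t) c \<and> c 0 = x t \<and> (\<forall>k. c ((1/2) ^ k) = y k t)" for t
  proof -
    have "x t \<in> topspace (T t)" "\<And>k. y k t \<in> topspace (T t)"
      using assms(3,4) by (simp_all add: PiE_iff)
    then show ?thesis
      by (rule smooth_curve_through_fast_sequence[OF manifold assms(2) _ _ assms(5,6) assms(7)[where t = t]])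
  qed
  then have "\<forall>t. \<exists>c. smooth_curve (T t) (d t) (A t) c \<and> c 0 = x t \<and> (\<forall>k. c ((1/2) ^ k) = y k t)"
    by blast
  from choice[OF this] obtain c where
    "\<forall>t. smooth_curve (T t) (d t) (A t) (c t) \<and> c t 0 = x t \<and> (\<forall>k. c t ((1/2) ^ k) = y k t)"
    by blast
  then show ?thesis
    by (intro exI[of _ "\<lambda>s t. c t s"]) (auto simp: structure_curve_def)
qed

lemma Cinf_prod_tendsto_along_structure_curve:
  assumes "f \<in> Cinf_prod T d A" "structure_curve T d A c"
  shows "(\<lambda>k. f (c ((1/2) ^ k))) \<longlonglongrightarrow> f (c 0)"
proof -
  have "continuous_on UNIV (f \<circ> c)"
    using assms smooth_real_on_imp_continuous_on unfolding Cinf_prod_def by blast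
  then have "isCont (f \<circ> c) 0"
    by (simp add: continuous_on_eq_continuous_at comp_def)
  from isCont_tendsto_compose[OF this LIMSEQ_power_zero[of "1/2::real"]] show ?thesis
    by simp
qed

theorem lemma9:
  fixes T :: "nat \<Rightarrow> 'a topology"
    and d :: "nat \<Rightarrow> nat"
    and A :: "nat \<Rightarrow> ('a set \<times> ('a \<Rightarrow> nat \<Rightarrow> real)) set"
    and f :: "(nat \<Rightarrow> 'a) \<Rightarrow> real"
  assumes "\<And>n. smooth_manifold (T n) (d n) (A n)"
    and "\<And>n. connected_space (T n)"
    and "f \<in> Cinf_prod T d A"
  shows "continuous_map (product_topology T UNIV) euclideanreal f"
proof (rule continuous_map_if_neighbourhood_sequences)
  fix x assume x: "x \<in> topspace (product_topology T UNIV)"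
  obtain U \<phi> W where chart: "\<And>t. (U t, \<phi> t) \<in> A t" "\<And>t. x t \<in> U t"
    and W: "\<And>k. openin (product_topology T UNIV) (W k)" "\<And>k. x \<in> W k"
      "\<And>k. W k \<subseteq> topspace (product_topology T UNIV)"
    and fast: "\<And>k y t. y \<in> W k \<Longrightarrow> t < k \<Longrightarrow>
      y t \<in> U t \<and> \<phi> t (y t) \<in> cube (d t) (\<phi> t (x t)) ((1/2) ^ (k * k))"
    by (rule product_chart_neighbourhoods[OF assms(1) x]) (rule that)
  have "(\<lambda>k. f (y k)) \<longlonglongrightarrow> f x" if y: "\<forall>k. y k \<in> W k" for y
  proof -
    have "\<exists>c. structure_curve T d A c \<and> c 0 = x \<and> (\<forall>k. c ((1/2) ^ k) = y k)"
      by (rule structure_curve_through_fast_sequence[OF assms(1,2) x _ chart])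
        (use y W(3) fast in blast)+
    then obtain c where c: "structure_curve T d A c" "c 0 = x" "\<forall>k. c ((1/2) ^ k) = y k"
      by blast
    from Cinf_prod_tendsto_along_structure_curve[OF assms(3) c(1)] show ?thesis
      using c(2,3) by simp
  qed
  with W(1,2) show "\<exists>W. (\<forall>k. openin (product_topology T UNIV) (W k) \<and> x \<in> W k) \<and>
      (\<forall>y. (\<forall>k. y k \<in> W k) \<longrightarrow> (\<lambda>k. f (y k)) \<longlonglongrightarrow> f x)"
    by (intro exI[of _ W]) blast
qed

end
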